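(* Let $u$ be as in the standing assumption of the context. Then at every point $(x,t)\in\hat\Omega$ where $u(x,t)<0$ we have \[v\,u^2\le\max_{\{(y,0)\in\hat\Omega\colon u(y,0)<0\}} v\,u^2 .\]
   Context: Standing assumption: $\hat\Omega\subset\mathbb{R}^{n+1}\times[0,\infty)$ is a (relatively) open set and $u\colon\hat\Omega\to\mathbb{R}$ is a smooth solution of $\dot u=\sqrt{1+|Du|^2}\,\mathrm{div}\!\left(\frac{Du}{\sqrt{1+|Du|^2}}\right)$ in $\hat\Omega\cap(\mathbb{R}^{n+1}\times(0,\infty))$; $u(x,t)\to0$ as $(x,t)\to(x_0,t_0)\in\partial\hat\Omega$; for every $T>0$ all derivatives of $u$ are uniformly bounded on $\hat\Omega\cap(\mathbb{R}^{n+1}\times[0,T])$ and extend continuously across the boundary, and $\hat\Omega\cap(\mathbb{R}^{n+1}\times[0,T])$ is bounded. Here $v:=\sqrt{1+|Du|^2}$ (equivalently $v=(-\langle e_{n+2},\nu\rangle)^{-1}$ for the downward unit normal $\nu$ of $\operatorname{graph}u(\cdot,t)\subset\mathbb{R}^{n+2}$). *)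

theory Defs
  imports "HOL-Analysis.Analysis"
begin

text \<open>Points of space-time are pairs (x,t) with x in a Euclidean space 'a (playing the
role of R^{n+1}) and t real.  Derivatives are taken within the domain, so that they also make
sense (one-sidedly) on the initial time slice t = 0.\<close>

fun pderivs :: "('a::real_normed_vector \<Rightarrow> real) \<Rightarrow> 'a set \<Rightarrow> 'a list \<Rightarrow> 'a \<Rightarrow> real" where
  "pderivs f S [] = f"
| "pderivs f S (h # hs) = (\<lambda>p. frechet_derivative (pderivs f S hs) (at p within S) h)"

definition gradx :: "('a::euclidean_space \<times> real \<Rightarrow> real) \<Rightarrow> ('a \<times> real) set \<Rightarrow> 'a \<times> real \<Rightarrow> 'a" where
  "gradx U S p = (\<Sum>b\<in>Basis. pderivs U S [(b, 0)] p *\<^sub>R b)"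

definition vfac :: "('a::euclidean_space \<times> real \<Rightarrow> real) \<Rightarrow> ('a \<times> real) set \<Rightarrow> 'a \<times> real \<Rightarrow> real" where
  "vfac U S p = sqrt (1 + (norm (gradx U S p))\<^sup>2)"

definition gmcf_at :: "('a::euclidean_space \<times> real \<Rightarrow> real) \<Rightarrow> ('a \<times> real) set \<Rightarrow> 'a \<times> real \<Rightarrow> bool" where
  "gmcf_at U S p \<longleftrightarrow>
     pderivs U S [(0, 1)] p =
       vfac U S p * (\<Sum>b\<in>Basis. frechet_derivative
          (\<lambda>q. pderivs U S [(b, 0)] q / vfac U S q) (at p within S) (b, 0))"

definition standing_assumption :: "('a::euclidean_space \<times> real) set \<Rightarrow> ('a \<Rightarrow> real \<Rightarrow> real) \<Rightarrow> bool" where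
  "standing_assumption \<Omega> u \<longleftrightarrow>
     (let U = (\<lambda>p. u (fst p) (snd p)); H = {p :: 'a \<times> real. snd p \<ge> 0} in
       \<Omega> \<subseteq> H \<and> openin (top_of_set H) \<Omega>
     \<comment> \<open>smoothness: derivatives of all orders exist on Omega-hat\<close>
     \<and> (\<forall>hs. \<forall>p\<in>\<Omega>. pderivs U \<Omega> hs differentiable (at p within \<Omega>))
     \<comment> \<open>the PDE for t > 0\<close>
     \<and> (\<forall>p\<in>\<Omega>. snd p > 0 \<longrightarrow> gmcf_at U \<Omega> p)
     \<comment> \<open>zero boundary values; the boundary is the relative boundary in R^{n+1} x [0,inf)\<close>
     \<and> (\<forall>p0 \<in> closure \<Omega> - \<Omega>. (U \<longlongrightarrow> 0) (at p0 within \<Omega>))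
     \<comment> \<open>for every T > 0: bounded domain slab, bounded derivatives, continuous extension\<close>
     \<and> (\<forall>T>0. bounded {p\<in>\<Omega>. snd p \<le> T}
          \<and> (\<forall>hs. \<exists>M. \<forall>p\<in>\<Omega>. snd p \<le> T \<longrightarrow> \<bar>pderivs U \<Omega> hs p\<bar> \<le> M)
          \<and> (\<forall>hs. \<forall>p0 \<in> closure {p\<in>\<Omega>. snd p \<le> T} - \<Omega>.
                 \<exists>l. (pderivs U \<Omega> hs \<longlongrightarrow> l) (at p0 within {p\<in>\<Omega>. snd p \<le> T}))))"

end

theory Submission
  imports Defs
begin

text \<open>Set \<open>w = v u\<^sup>2\<close>. If \<open>w\<close> exceeded its initial maximum \<open>c\<close> somewhere, then for small
  \<open>\<epsilon> > 0\<close> the function \<open>w - \<epsilon> t\<close> attains its maximum over a compact superlevel set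
  (compact because \<open>w \<rightarrow> 0\<close> at the boundary) at a point with \<open>t > 0\<close> and \<open>u < 0\<close>. There the
  spatial gradient of \<open>w\<close> vanishes, its spatial Hessian is nonpositive and \<open>w\<^sub>t \<ge> \<epsilon>\<close>. The first
  order condition says that \<open>Du\<close> is an eigenvector of \<open>D\<^sup>2u\<close> with eigenvalue \<open>-2v\<^sup>2/u\<close>; with it,
  the evolution equation of \<open>w\<close> becomes \<open>w\<^sub>t = tr(g\<^sup>-\<^sup>1 D\<^sup>2w) - u\<^sup>2|D\<^sup>2u|\<^sup>2/v + 4v|Du|\<^sup>2 + 2|Du|\<^sup>2/v\<close>
  at that point, where \<open>g\<close> is the induced metric, and Cauchy--Schwarz \<open>|D\<^sup>2u Du|\<^sup>2 \<le> |Du|\<^sup>2 |D\<^sup>2u|\<^sup>2\<close> makes the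
  right-hand side nonpositive, contradicting \<open>w\<^sub>t \<ge> \<epsilon>\<close>.\<close>

section \<open>Calculus: symmetry of second derivatives and one-dimensional extrema\<close>

lemma has_real_derivative_along_line:
  fixes f :: "'b::real_normed_vector \<Rightarrow> real"
  assumes "(f has_derivative L) (at (a + r *\<^sub>R k))"
  shows "((\<lambda>r. f (a + r *\<^sub>R k)) has_real_derivative L k) (at r)"
proof -
  have "((\<lambda>r. a + r *\<^sub>R k) has_derivative (\<lambda>r. r *\<^sub>R k)) (at r)"
    by (auto intro!: derivative_eq_intros)
  from has_derivative_compose[OF this assms]
  have "((\<lambda>r. f (a + r *\<^sub>R k)) has_derivative (\<lambda>r. L (r *\<^sub>R k))) (at r)"
    by (simp add: o_def)
  moreover have "(\<lambda>r. L (r *\<^sub>R k)) = (*) (L k)"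
    using linear_scale[OF has_derivative_linear[OF assms]] by (auto simp: fun_eq_iff mult.commute)
  ultimately show ?thesis
    by (simp add: has_field_derivative_def)
qed

lemma second_difference_mean_value:
  fixes f :: "'b::real_normed_vector \<Rightarrow> real"
  assumes s: "0 < s"
    and df: "\<And>y. y \<in> closed_segment x (x + s *\<^sub>R k) \<union> closed_segment (x + s *\<^sub>R h) (x + s *\<^sub>R h + s *\<^sub>R k)
               \<Longrightarrow> (f has_derivative f' y) (at y)"
  shows "\<exists>z. 0 < z \<and> z < s \<and>
    f (x + s *\<^sub>R h + s *\<^sub>R k) - f (x + s *\<^sub>R h) - f (x + s *\<^sub>R k) + f x
      = s * (f' (x + s *\<^sub>R h + z *\<^sub>R k) k - f' (x + z *\<^sub>R k) k)"
proof -
  define \<phi> where "\<phi> r = f (x + s *\<^sub>R h + r *\<^sub>R k) - f (x + r *\<^sub>R k)" for r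
  have "\<exists>z. 0 < z \<and> z < s \<and> \<phi> s - \<phi> 0 = (s - 0) * (f' (x + s *\<^sub>R h + z *\<^sub>R k) k - f' (x + z *\<^sub>R k) k)"
  proof (rule MVT2)
    fix r assume r: "0 \<le> r" "r \<le> s"
    have seg: "a + r *\<^sub>R k \<in> closed_segment a (a + s *\<^sub>R k)" for a
      using s r by (auto simp: closed_segment_def algebra_simps intro!: exI[of _ "r / s"])
    have "((\<lambda>r. f ((x + s *\<^sub>R h) + r *\<^sub>R k)) has_real_derivative f' (x + s *\<^sub>R h + r *\<^sub>R k) k) (at r)"
      by (rule has_real_derivative_along_line, rule df) (use seg in auto)
    moreover have "((\<lambda>r. f (x + r *\<^sub>R k)) has_real_derivative f' (x + r *\<^sub>R k) k) (at r)"
      by (rule has_real_derivative_along_line, rule df) (use seg in auto)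
    ultimately show "(\<phi> has_real_derivative f' (x + s *\<^sub>R h + r *\<^sub>R k) k - f' (x + r *\<^sub>R k) k) (at r)"
      unfolding \<phi>_def by (intro DERIV_diff) auto
  qed (use s in auto)
  then show ?thesis
    by (auto simp: \<phi>_def algebra_simps)
qed

lemma second_difference_remainder:
  fixes F :: "'b::real_normed_vector \<Rightarrow> real"
  assumes lin: "linear g" and e: "e \<ge> 0" and z: "0 < z" "z < s"
    and R: "\<And>y. norm (y - x) < d \<Longrightarrow> \<bar>F y - F x - g (y - x)\<bar> \<le> e * norm (y - x)"
    and near: "norm (s *\<^sub>R h + z *\<^sub>R k) < d" "norm (z *\<^sub>R k) < d"
  shows "\<bar>s * (F (x + s *\<^sub>R h + z *\<^sub>R k) - F (x + z *\<^sub>R k)) - s\<^sup>2 * g h\<bar>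
    \<le> e * s\<^sup>2 * (norm h + 2 * norm k)"
proof -
  define R1 where "R1 = F (x + s *\<^sub>R h + z *\<^sub>R k) - F x - g (s *\<^sub>R h + z *\<^sub>R k)"
  define R2 where "R2 = F (x + z *\<^sub>R k) - F x - g (z *\<^sub>R k)"
  have "\<bar>R1\<bar> \<le> e * norm (s *\<^sub>R h + z *\<^sub>R k)"
    using R[of "x + s *\<^sub>R h + z *\<^sub>R k"] near by (simp add: R1_def add.assoc)
  also have "\<dots> \<le> e * (s * norm h + s * norm k)"
  proof -
    have "norm (s *\<^sub>R h + z *\<^sub>R k) \<le> s * norm h + z * norm k"
      using norm_triangle_ineq[of "s *\<^sub>R h" "z *\<^sub>R k"] z by simp
    also have "\<dots> \<le> s * norm h + s * norm k"
      using z by (simp add: mult_right_mono)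
    finally show ?thesis
      using e by (rule mult_left_mono)
  qed
  finally have R1: "\<bar>R1\<bar> \<le> e * (s * norm h + s * norm k)" .
  have "\<bar>R2\<bar> \<le> e * norm (z *\<^sub>R k)"
    using R[of "x + z *\<^sub>R k"] near by (simp add: R2_def)
  also have "\<dots> \<le> e * (s * norm k)"
    using z e by (simp add: mult_left_mono mult_right_mono)
  finally have "\<bar>R1 - R2\<bar> \<le> e * (s * norm h + 2 * s * norm k)"
    using R1 by (simp add: algebra_simps)
  moreover have "s * (F (x + s *\<^sub>R h + z *\<^sub>R k) - F (x + z *\<^sub>R k)) - s\<^sup>2 * g h = s * (R1 - R2)"
    using linear_add[OF lin] linear_scale[OF lin]
    unfolding R1_def R2_def by (simp add: power2_eq_square algebra_simps)
  ultimately have "\<bar>s * (F (x + s *\<^sub>R h + z *\<^sub>R k) - F (x + z *\<^sub>R k)) - s\<^sup>2 * g h\<bar>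
      \<le> s * (e * (s * norm h + 2 * s * norm k))"
    using z by (simp add: abs_mult mult_left_mono)
  then show ?thesis
    by (simp add: power2_eq_square algebra_simps)
qed

lemma second_difference_estimate:
  fixes f :: "'b::real_normed_vector \<Rightarrow> real"
  assumes S: "open S" "x \<in> S"
    and df: "\<And>y. y \<in> S \<Longrightarrow> (f has_derivative f' y) (at y)"
    and dk: "((\<lambda>y. f' y k) has_derivative gk) (at x)"
    and e: "e > 0"
  shows "\<exists>d>0. \<forall>s. 0 < s \<and> s < d \<longrightarrow>
     \<bar>f (x + s *\<^sub>R h + s *\<^sub>R k) - f (x + s *\<^sub>R h) - f (x + s *\<^sub>R k) + f x - s\<^sup>2 * gk h\<bar>
        \<le> e * s\<^sup>2 * (norm h + 2 * norm k)"
proof -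
  from dk[unfolded has_derivative_at_alt] e obtain d0 where d0: "d0 > 0" and lin: "linear gk"
    and R: "\<And>y. norm (y - x) < d0 \<Longrightarrow> \<bar>f' y k - f' x k - gk (y - x)\<bar> \<le> e * norm (y - x)"
    using bounded_linear.linear by fastforce
  from S obtain r0 where r0: "r0 > 0" "ball x r0 \<subseteq> S"
    using open_contains_ball by blast
  define d where "d = min d0 r0 / (norm h + norm k + 1)"
  have n: "norm h + norm k + 1 > 0"
    by (simp add: add_nonneg_pos)
  have "d > 0"
    unfolding d_def using d0 r0 n by simp
  have near: "norm (a *\<^sub>R h + r *\<^sub>R k) < min d0 r0"
    if "0 < s" "s < d" "0 \<le> a" "a \<le> s" "0 \<le> r" "r \<le> s" for s a r
  proof -
    have "norm (a *\<^sub>R h + r *\<^sub>R k) \<le> a * norm h + r * norm k"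
      using norm_triangle_ineq[of "a *\<^sub>R h" "r *\<^sub>R k"] that by simp
    also have "\<dots> \<le> s * norm h + s * norm k"
      using that by (intro add_mono mult_right_mono) auto
    also have "\<dots> \<le> s * (norm h + norm k + 1)"
      using that by (simp add: algebra_simps)
    also have "\<dots> < d * (norm h + norm k + 1)"
      using that n by (intro mult_strict_right_mono)
    also have "\<dots> = min d0 r0"
      unfolding d_def using n by simp
    finally show ?thesis .
  qed
  show ?thesis
  proof (intro exI[of _ d] conjI \<open>d > 0\<close> allI impI)
    fix s :: real assume s: "0 < s \<and> s < d"
    have "\<exists>z. 0 < z \<and> z < s \<and>
      f (x + s *\<^sub>R h + s *\<^sub>R k) - f (x + s *\<^sub>R h) - f (x + s *\<^sub>R k) + f x
        = s * (f' (x + s *\<^sub>R h + z *\<^sub>R k) k - f' (x + z *\<^sub>R k) k)"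
    proof (rule second_difference_mean_value[OF conjunct1[OF s]], rule df)
      fix y assume "y \<in> closed_segment x (x + s *\<^sub>R k) \<union> closed_segment (x + s *\<^sub>R h) (x + s *\<^sub>R h + s *\<^sub>R k)"
      moreover have "x + (a *\<^sub>R h + r *\<^sub>R k) \<in> ball x r0" if "a \<in> {0, s}" "r \<in> {0, s}" for a r
        using near[of s a r] that s by (auto simp: dist_norm norm_minus_commute add.commute)
      ultimately have "y \<in> ball x r0"
        using closed_segment_subset[OF _ _ convex_ball, of _ x r0]
        by (smt (verit) add.right_neutral add.assoc insertCI scaleR_zero_left subsetD Un_iff)
      then show "y \<in> S"
        using r0 by blast
    qed
    then obtain z where z: "0 < z" "z < s" and mvt:
      "f (x + s *\<^sub>R h + s *\<^sub>R k) - f (x + s *\<^sub>R h) - f (x + s *\<^sub>R k) + f x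
        = s * (f' (x + s *\<^sub>R h + z *\<^sub>R k) k - f' (x + z *\<^sub>R k) k)" by blast
    have "norm (s *\<^sub>R h + z *\<^sub>R k) < d0" "norm (0 *\<^sub>R h + z *\<^sub>R k) < d0"
      using near[of s s z] near[of s 0 z] s z by auto
    then show "\<bar>f (x + s *\<^sub>R h + s *\<^sub>R k) - f (x + s *\<^sub>R h) - f (x + s *\<^sub>R k) + f x - s\<^sup>2 * gk h\<bar>
        \<le> e * s\<^sup>2 * (norm h + 2 * norm k)"
      unfolding mvt using second_difference_remainder[OF lin _ z R] e by simp
  qed
qed

lemma second_derivative_symmetric:
  fixes f :: "'b::real_normed_vector \<Rightarrow> real"
  assumes S: "open S" "x \<in> S"
    and df: "\<And>y. y \<in> S \<Longrightarrow> (f has_derivative f' y) (at y)"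
    and dh: "((\<lambda>y. f' y h) has_derivative gh) (at x)"
    and dk: "((\<lambda>y. f' y k) has_derivative gk) (at x)"
  shows "gk h = gh k"
proof (rule ccontr)
  assume ne: "gk h \<noteq> gh k"
  define C where "C = 2 * (norm h + norm k) + 1"
  have C: "C > 0"
    unfolding C_def by (simp add: add_nonneg_pos)
  define e where "e = \<bar>gk h - gh k\<bar> / (2 * C)"
  have e: "e > 0"
    using ne C unfolding e_def by simp
  obtain d1 where d1: "d1 > 0" and A: "\<And>s. 0 < s \<Longrightarrow> s < d1 \<Longrightarrow>
     \<bar>f (x + s *\<^sub>R h + s *\<^sub>R k) - f (x + s *\<^sub>R h) - f (x + s *\<^sub>R k) + f x - s\<^sup>2 * gk h\<bar>
        \<le> e * s\<^sup>2 * (norm h + 2 * norm k)"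
    using second_difference_estimate[OF S df dk e, of h] by blast
  obtain d2 where d2: "d2 > 0" and B: "\<And>s. 0 < s \<Longrightarrow> s < d2 \<Longrightarrow>
     \<bar>f (x + s *\<^sub>R k + s *\<^sub>R h) - f (x + s *\<^sub>R k) - f (x + s *\<^sub>R h) + f x - s\<^sup>2 * gh k\<bar>
        \<le> e * s\<^sup>2 * (norm k + 2 * norm h)"
    using second_difference_estimate[OF S df dh e, of k] by blast
  define s where "s = min d1 d2 / 2"
  have s: "0 < s" "s < d1" "s < d2"
    using d1 d2 unfolding s_def by auto
  define \<Delta> where "\<Delta> = f (x + s *\<^sub>R h + s *\<^sub>R k) - f (x + s *\<^sub>R h) - f (x + s *\<^sub>R k) + f x"
  have "x + s *\<^sub>R k + s *\<^sub>R h = x + s *\<^sub>R h + s *\<^sub>R k"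
    by (simp add: algebra_simps)
  then have B': "\<bar>\<Delta> - s\<^sup>2 * gh k\<bar> \<le> e * s\<^sup>2 * (norm k + 2 * norm h)"
    using B[OF s(1,3)] unfolding \<Delta>_def by (simp add: algebra_simps)
  have "s\<^sup>2 * \<bar>gk h - gh k\<bar> = \<bar>(\<Delta> - s\<^sup>2 * gh k) - (\<Delta> - s\<^sup>2 * gk h)\<bar>"
    by (simp add: abs_mult flip: right_diff_distrib)
  also have "\<dots> \<le> e * s\<^sup>2 * ((norm h + 2 * norm k) + (norm k + 2 * norm h))"
    using A[OF s(1,2), folded \<Delta>_def] B' by (simp add: algebra_simps)
  also have "\<dots> < e * s\<^sup>2 * (2 * C)"
    using e s by (intro mult_strict_left_mono) (simp_all add: C_def add_nonneg_pos)
  also have "\<dots> = s\<^sup>2 * \<bar>gk h - gh k\<bar>"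
    unfolding e_def using C by simp
  finally show False
    by simp
qed

lemma derivative_nonpos_at_local_max:
  fixes \<phi> \<phi>' :: "real \<Rightarrow> real"
  assumes d: "d > 0" and max: "\<And>s. \<bar>s\<bar> < d \<Longrightarrow> \<phi> s \<le> \<phi> 0"
    and der: "\<And>s. \<bar>s\<bar> < d \<Longrightarrow> (\<phi> has_real_derivative \<phi>' s) (at s)"
    and der2: "(\<phi>' has_real_derivative L) (at 0)"
  shows "\<phi>' 0 = 0" and "L \<le> 0"
proof -
  show crit: "\<phi>' 0 = 0"
    by (rule DERIV_local_max[OF der[of 0] d]) (use d max in auto)
  show "L \<le> 0"
  proof (rule ccontr)
    assume "\<not> L \<le> 0"
    from DERIV_pos_inc_right[OF der2] this obtain d' where d': "d' > 0"
      and inc: "\<And>h. h > 0 \<Longrightarrow> h < d' \<Longrightarrow> \<phi>' 0 < \<phi>' (0 + h)" by force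
    define s where "s = min d d' / 2"
    have s: "0 < s" "s < d" "s < d'"
      using d d' unfolding s_def by auto
    obtain z where z: "0 < z" "z < s" and mvt: "\<phi> s - \<phi> 0 = (s - 0) * \<phi>' z"
      using MVT2[of 0 s \<phi> \<phi>'] s der by force
    have "\<phi>' z > 0"
      using inc[of z] crit z s by simp
    then have "\<phi> s > \<phi> 0"
      using mvt s by (smt (verit) mult_pos_pos)
    with max[of s] s show False
      by simp
  qed
qed

lemma derivative_nonneg_at_left_max:
  fixes f :: "real \<Rightarrow> real"
  assumes der: "(f has_real_derivative l) (at x)" and d: "d > 0"
    and max: "\<And>y. x - d < y \<Longrightarrow> y < x \<Longrightarrow> f y \<le> f x"
  shows "l \<ge> 0"
proof (rule ccontr)
  assume "\<not> l \<ge> 0"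
  with DERIV_neg_dec_left[OF der] obtain d' where d': "d' > 0"
    and dec: "\<And>h. h > 0 \<Longrightarrow> h < d' \<Longrightarrow> f x < f (x - h)" by force
  define h where "h = min d d' / 2"
  have "h > 0" "h < d" "h < d'"
    using d d' unfolding h_def by auto
  with dec[of h] max[of "x - h"] show False
    by simp
qed

lemma linear_pair_left: "linear L \<Longrightarrow> linear (\<lambda>y. L (y, 0 :: real))"
  unfolding linear_iff by (metis add_Pair add_0_left scaleR_Pair scaleR_zero_right)

section \<open>Bilinear forms and the metric of a graph\<close>

lemma linear_sum_Basis:
  fixes f :: "'a::euclidean_space \<Rightarrow> real"
  assumes "linear f"
  shows "(\<Sum>b\<in>Basis. (p \<bullet> b) * f b) = f p"
  using Linear_Algebra.linear_componentwise[OF assms, of p 1] by simp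

lemma bilinear_sum_Basis_left:
  fixes B :: "'a::euclidean_space \<Rightarrow> 'a \<Rightarrow> real"
  assumes "bilinear B"
  shows "(\<Sum>b\<in>Basis. (p \<bullet> b) * B b y) = B p y"
  using assms by (simp add: bilinear_def linear_sum_Basis)

lemma bilinear_sum_Basis_right:
  fixes B :: "'a::euclidean_space \<Rightarrow> 'a \<Rightarrow> real"
  assumes "bilinear B"
  shows "(\<Sum>b\<in>Basis. (p \<bullet> b) * B y b) = B y p"
  using assms by (simp add: bilinear_def linear_sum_Basis)

lemma power2_norm_eq_sum_Basis: "(norm p)\<^sup>2 = (\<Sum>b\<in>Basis. (p \<bullet> b)\<^sup>2)"
  for p :: "'a::euclidean_space"
  unfolding power2_norm_eq_inner by (subst euclidean_inner) (simp add: power2_eq_square)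

lemma bilinear_mult_linear:
  assumes "linear f" "linear g"
  shows "bilinear (\<lambda>h k. (f h :: real) * g k)"
  using assms unfolding bilinear_def linear_iff by (simp add: algebra_simps)

lemma bilinear_plus:
  assumes "bilinear A" "bilinear B"
  shows "bilinear (\<lambda>h k. (A h k :: real) + B h k)"
  using assms unfolding bilinear_def linear_iff by (simp add: algebra_simps)

lemma bilinear_scaled:
  assumes "bilinear A"
  shows "bilinear (\<lambda>h k. c * (A h k :: real))"
  using assms unfolding bilinear_def linear_iff by (simp add: algebra_simps)

lemma bilinear_sum_family:
  assumes "\<And>i. bilinear (A i)"
  shows "bilinear (\<lambda>h k. (\<Sum>i\<in>I. A i h k :: real))"
  using assms unfolding bilinear_def linear_iff by (simp add: sum.distrib sum_distrib_left)

text \<open>The vectors \<open>q b\<close> are the columns of the square root of \<open>I - p p\<^sup>T / v\<^sup>2\<close>,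
  the inverse of the metric induced on a graph with gradient \<open>p\<close>.\<close>

lemma trace_bilinear_graph_metric:
  fixes B :: "'a::euclidean_space \<Rightarrow> 'a \<Rightarrow> real" and p :: 'a
  assumes B: "bilinear B"
  defines "v \<equiv> sqrt (1 + (norm p)\<^sup>2)"
  defines "q \<equiv> (\<lambda>b. b - ((b \<bullet> p) / (v * (v + 1))) *\<^sub>R p)"
  shows "(\<Sum>b\<in>Basis. B (q b) (q b)) = (\<Sum>b\<in>Basis. B b b) - B p p / v\<^sup>2"
proof -
  define \<kappa> where "\<kappa> = 1 / (v * (v + 1))"
  have v: "v \<ge> 1" "v\<^sup>2 = 1 + (norm p)\<^sup>2"
    unfolding v_def by simp_all
  have "B (q b) (q b) = B b b - \<kappa> * ((p \<bullet> b) * B b p) - \<kappa> * ((p \<bullet> b) * B p b)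
      + \<kappa>\<^sup>2 * (p \<bullet> b)\<^sup>2 * B p p" for b
    using B unfolding q_def \<kappa>_def
    by (simp add: bilinear_lsub bilinear_rsub bilinear_lmul bilinear_rmul inner_commute
        power2_eq_square algebra_simps)
  then have "(\<Sum>b\<in>Basis. B (q b) (q b)) = (\<Sum>b\<in>Basis. B b b)
      - \<kappa> * (\<Sum>b\<in>Basis. (p \<bullet> b) * B b p) - \<kappa> * (\<Sum>b\<in>Basis. (p \<bullet> b) * B p b)
      + \<kappa>\<^sup>2 * (\<Sum>b\<in>Basis. (p \<bullet> b)\<^sup>2) * B p p"
    by (simp add: sum.distrib sum_subtractf sum_distrib_left sum_distrib_right mult.assoc)
  also have "\<dots> = (\<Sum>b\<in>Basis. B b b) - (2 * \<kappa> - \<kappa>\<^sup>2 * (norm p)\<^sup>2) * B p p"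
    using bilinear_sum_Basis_left[OF B] bilinear_sum_Basis_right[OF B] power2_norm_eq_sum_Basis[of p]
    by (simp add: algebra_simps)
  also have "2 * \<kappa> - \<kappa>\<^sup>2 * (norm p)\<^sup>2 = 1 / v\<^sup>2"
  proof -
    have np: "(norm p)\<^sup>2 = (v - 1) * (v + 1)"
      using v by (simp add: algebra_simps power2_eq_square)
    have "\<kappa> * (norm p)\<^sup>2 = (v - 1) / v"
      using v unfolding \<kappa>_def np by simp
    then have "2 * \<kappa> - \<kappa>\<^sup>2 * (norm p)\<^sup>2 = \<kappa> * (2 - (v - 1) / v)"
      by (simp add: power2_eq_square algebra_simps)
    also have "\<dots> = \<kappa> * ((v + 1) / v)"
      using v by (simp add: field_simps)
    also have "\<dots> = 1 / v\<^sup>2"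
    proof -
      have "v \<noteq> 0" "v + 1 \<noteq> 0"
        using v(1) by auto
      then show ?thesis
        unfolding \<kappa>_def by (simp add: power2_eq_square)
    qed
    finally show ?thesis .
  qed
  finally show ?thesis
    by simp
qed

lemma graph_weight_time_derivative_arith:
  fixes u v P S \<sigma> \<eta> trJ Jpp trH :: real
  assumes v: "v > 0" "v\<^sup>2 = 1 + P" and P: "P \<ge> 0" and S: "S \<ge> 0"
    and \<sigma>: "u\<^sup>2 * \<sigma> = 4 * v^4 * P" and \<eta>: "u * \<eta> = - 2 * v\<^sup>2 * P" and CS: "\<sigma> \<le> P * S"
    and trace: "u\<^sup>2 / v * S + u\<^sup>2 / v * trJ - 10 * v * P + 2 * u * v * trH
      - (u\<^sup>2 / v * \<sigma> + u\<^sup>2 / v * Jpp - 10 * v * P\<^sup>2 + 2 * u * v * \<eta>) / v\<^sup>2 \<le> 0"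
  shows "u\<^sup>2 / v * (trJ - (2 * \<sigma> + Jpp) / v\<^sup>2 + 2 * \<eta>\<^sup>2 / v^4) + 2 * u * v * (trH - \<eta> / v\<^sup>2) \<le> 0"
proof -
  have "u\<^sup>2 / v * (trJ - (2 * \<sigma> + Jpp) / v\<^sup>2 + 2 * \<eta>\<^sup>2 / v^4) + 2 * u * v * (trH - \<eta> / v\<^sup>2)
     = u\<^sup>2 * trJ / v - 2 * (u\<^sup>2 * \<sigma>) / v^3 - u\<^sup>2 * Jpp / v^3 + 2 * (u * \<eta>)\<^sup>2 / v^5
       + 2 * u * v * trH - 2 * (u * \<eta>) / v"
    using v(1) by (simp add: field_simps power2_eq_square power3_eq_cube) (simp add: eval_nat_numeral algebra_simps)
  also have "\<dots> = u\<^sup>2 * trJ / v - 4 * v * P - u\<^sup>2 * Jpp / v^3 + 8 * P\<^sup>2 / v + 2 * u * v * trH"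
    unfolding \<sigma> \<eta> using v(1) by (simp add: field_simps eval_nat_numeral)
  also have "\<dots> = (u\<^sup>2 / v * S + u\<^sup>2 / v * trJ - 10 * v * P + 2 * u * v * trH
      - (u\<^sup>2 / v * \<sigma> + u\<^sup>2 / v * Jpp - 10 * v * P\<^sup>2 + 2 * u * v * \<eta>) / v\<^sup>2)
      + (6 * v\<^sup>2 * P - 2 * P\<^sup>2 - u\<^sup>2 * S) / v"
  proof -
    have "u\<^sup>2 / v * \<sigma> + 2 * u * v * \<eta> = (u\<^sup>2 * \<sigma>) / v + 2 * v * (u * \<eta>)"
      by (simp add: algebra_simps)
    also have "\<dots> = 0"
      unfolding \<sigma> \<eta> using v(1) by (simp add: field_simps eval_nat_numeral)
    finally have "u\<^sup>2 / v * \<sigma> + 2 * u * v * \<eta> = 0" .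
    then show ?thesis
      using v(1) by (simp add: field_simps eval_nat_numeral)
  qed
  also have "\<dots> \<le> 0 + 0"
  proof (rule add_mono[OF trace])
    have CS': "P * (4 * v^4) \<le> P * (u\<^sup>2 * S)"
      using mult_left_mono[OF CS, of "u\<^sup>2"] \<sigma> by (simp add: algebra_simps)
    have "6 * v\<^sup>2 * P - 2 * P\<^sup>2 - u\<^sup>2 * S \<le> 0"
    proof (cases "P = 0")
      case True
      then show ?thesis
        using S by simp
    next
      case False
      with P CS' have "4 * (v\<^sup>2 * v\<^sup>2) \<le> u\<^sup>2 * S"
        by (simp add: eval_nat_numeral mult.assoc)
      then show ?thesis
        using P unfolding v(2) by (simp add: algebra_simps power2_eq_square)
    qed
    then show "(6 * v\<^sup>2 * P - 2 * P\<^sup>2 - u\<^sup>2 * S) / v \<le> 0"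
      using v by (simp add: divide_nonpos_pos)
  qed
  finally show ?thesis
    by simp
qed

lemma bilinear_Cauchy_Schwarz:
  fixes H :: "'a::euclidean_space \<Rightarrow> 'a \<Rightarrow> real"
  assumes H: "bilinear H"
  shows "(\<Sum>c\<in>Basis. (H p c)\<^sup>2) \<le> (norm p)\<^sup>2 * (\<Sum>b\<in>Basis. \<Sum>c\<in>Basis. (H b c)\<^sup>2)"
proof -
  have "(\<Sum>c\<in>Basis. (H p c)\<^sup>2) \<le> (\<Sum>c\<in>Basis. (norm p)\<^sup>2 * (\<Sum>b\<in>Basis. (H b c)\<^sup>2))"
  proof (rule sum_mono)
    fix c :: 'a
    have "(H p c)\<^sup>2 = (\<Sum>b\<in>Basis. (p \<bullet> b) * H b c)\<^sup>2"
      by (simp add: bilinear_sum_Basis_left[OF H])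
    also have "\<dots> \<le> (\<Sum>b\<in>Basis. (p \<bullet> b)\<^sup>2) * (\<Sum>b\<in>Basis. (H b c)\<^sup>2)"
      by (rule Cauchy_Schwarz_ineq_sum)
    finally show "(H p c)\<^sup>2 \<le> (norm p)\<^sup>2 * (\<Sum>b\<in>Basis. (H b c)\<^sup>2)"
      unfolding power2_norm_eq_sum_Basis[of p] .
  qed
  also have "\<dots> = (norm p)\<^sup>2 * (\<Sum>b\<in>Basis. \<Sum>c\<in>Basis. (H b c)\<^sup>2)"
    using sum.swap[of "\<lambda>b c. (H b c)\<^sup>2" Basis Basis] by (simp add: sum_distrib_left)
  finally show ?thesis .
qed

text \<open>The quadratic form in \<open>hess\<close> is the spatial Hessian of \<open>v u\<^sup>2\<close>, rewritten with the
  first-order condition \<open>uH\<close>; its trace against the inverse metric of the graph is nonpositive.\<close>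

lemma graph_weight_hessian_trace:
  fixes u :: real and p :: "'a::euclidean_space" and H J :: "'a \<Rightarrow> 'a \<Rightarrow> real"
  assumes H: "bilinear H" and J: "bilinear J"
  defines "v \<equiv> sqrt (1 + (norm p)\<^sup>2)"
  assumes uH: "\<And>h. u * H h p = - 2 * v\<^sup>2 * (p \<bullet> h)"
    and hess: "\<And>h. u\<^sup>2 / v * (\<Sum>c\<in>Basis. (H h c)\<^sup>2) + u\<^sup>2 / v * J h h - u\<^sup>2 / v^3 * (H h p)\<^sup>2
      + 4 * u / v * ((p \<bullet> h) * H h p) + 2 * v * (p \<bullet> h)\<^sup>2 + 2 * u * v * H h h \<le> 0"
  shows "u\<^sup>2 / v * (\<Sum>b\<in>Basis. \<Sum>c\<in>Basis. (H b c)\<^sup>2) + u\<^sup>2 / v * (\<Sum>b\<in>Basis. J b b)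
      - 10 * v * (norm p)\<^sup>2 + 2 * u * v * (\<Sum>b\<in>Basis. H b b)
      - (u\<^sup>2 / v * (\<Sum>b\<in>Basis. (H p b)\<^sup>2) + u\<^sup>2 / v * J p p - 10 * v * ((norm p)\<^sup>2)\<^sup>2
         + 2 * u * v * H p p) / v\<^sup>2 \<le> 0"
proof -
  have v: "v > 0"
    unfolding v_def by (simp add: add_pos_nonneg)
  have lin: "linear (\<lambda>h. H h c)" "linear (\<lambda>h. p \<bullet> h)" for c
    using H bounded_linear_inner_right[of p] by (simp_all add: bilinear_def bounded_linear.linear)
  define B where "B h k = u\<^sup>2 / v * (\<Sum>c\<in>Basis. H h c * H k c) + u\<^sup>2 / v * J h k
    + (- 10 * v) * ((p \<bullet> h) * (p \<bullet> k)) + (2 * u * v) * H h k" for h k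
  have "bilinear B"
    unfolding B_def[abs_def]
    by (intro bilinear_plus bilinear_scaled bilinear_sum_family bilinear_mult_linear lin H J)
  have B_neg: "B h h \<le> 0" for h
  proof -
    have "u\<^sup>2 / v^3 * (H h p)\<^sup>2 = (u * H h p)\<^sup>2 / v^3"
      by (simp add: power_mult_distrib)
    also have "\<dots> = 4 * v * (p \<bullet> h)\<^sup>2"
      unfolding uH using v by (simp add: field_simps eval_nat_numeral)
    finally have "u\<^sup>2 / v^3 * (H h p)\<^sup>2 = 4 * v * (p \<bullet> h)\<^sup>2" .
    moreover have "4 * u / v * ((p \<bullet> h) * H h p) = 4 * (p \<bullet> h) * (u * H h p) / v"
      by (simp add: algebra_simps)
    then have "4 * u / v * ((p \<bullet> h) * H h p) = - 8 * v * (p \<bullet> h)\<^sup>2"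
      unfolding uH using v by (simp add: field_simps power2_eq_square)
    ultimately show ?thesis
      using hess[of h] unfolding B_def by (simp add: power2_eq_square algebra_simps)
  qed
  define q where "q b = b - ((b \<bullet> p) / (v * (v + 1))) *\<^sub>R p" for b
  have "(\<Sum>b\<in>Basis. B b b) - B p p / v\<^sup>2 = (\<Sum>b\<in>Basis. B (q b) (q b))"
    unfolding q_def v_def by (rule trace_bilinear_graph_metric[OF \<open>bilinear B\<close>, symmetric])
  also have "\<dots> \<le> 0"
    by (rule sum_nonpos) (use B_neg in auto)
  finally have "(\<Sum>b\<in>Basis. B b b) - B p p / v\<^sup>2 \<le> 0" .
  moreover have "(\<Sum>b\<in>Basis. B b b) = u\<^sup>2 / v * (\<Sum>b\<in>Basis. \<Sum>c\<in>Basis. (H b c)\<^sup>2)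
      + u\<^sup>2 / v * (\<Sum>b\<in>Basis. J b b) - 10 * v * (norm p)\<^sup>2 + 2 * u * v * (\<Sum>b\<in>Basis. H b b)"
    unfolding B_def power2_norm_eq_sum_Basis[of p]
    by (simp add: sum.distrib sum_subtractf sum_distrib_left power2_eq_square)
  moreover have "B p p = u\<^sup>2 / v * (\<Sum>b\<in>Basis. (H p b)\<^sup>2) + u\<^sup>2 / v * J p p
      - 10 * v * ((norm p)\<^sup>2)\<^sup>2 + 2 * u * v * H p p"
    unfolding B_def by (simp add: power2_eq_square flip: power2_norm_eq_inner)
  ultimately show ?thesis
    by simp
qed

text \<open>\<open>crit\<close> and \<open>hess\<close> are the first and second order conditions at a spatial maximum of
  \<open>w = v u\<^sup>2\<close>; the conclusion is \<open>w\<^sub>t \<le> 0\<close>, with \<open>w\<^sub>t\<close> expressed through the flow equation.\<close>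

lemma graph_weight_time_derivative_nonpos:
  fixes u :: real and p :: "'a::euclidean_space" and H J :: "'a \<Rightarrow> 'a \<Rightarrow> real"
  assumes H: "bilinear H" and H_sym: "\<And>x y. H x y = H y x" and J: "bilinear J" and u: "u < 0"
  defines "v \<equiv> sqrt (1 + (norm p)\<^sup>2)"
  assumes crit: "\<And>h. u\<^sup>2 / v * H h p + 2 * u * v * (p \<bullet> h) = 0"
    and hess: "\<And>h. u\<^sup>2 / v * (\<Sum>c\<in>Basis. (H h c)\<^sup>2) + u\<^sup>2 / v * J h h - u\<^sup>2 / v^3 * (H h p)\<^sup>2
      + 4 * u / v * ((p \<bullet> h) * H h p) + 2 * v * (p \<bullet> h)\<^sup>2 + 2 * u * v * H h h \<le> 0"
  shows "u\<^sup>2 / v * ((\<Sum>b\<in>Basis. J b b) - (2 * (\<Sum>b\<in>Basis. (H p b)\<^sup>2) + J p p) / v\<^sup>2 + 2 * (H p p)\<^sup>2 / v^4)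
    + 2 * u * v * ((\<Sum>b\<in>Basis. H b b) - H p p / v\<^sup>2) \<le> 0"
proof -
  define P where "P = (norm p)\<^sup>2"
  have v: "v > 0" "v\<^sup>2 = 1 + P"
    unfolding v_def P_def by (simp_all add: add_pos_nonneg)
  have uH: "u * H h p = - 2 * v\<^sup>2 * (p \<bullet> h)" for h
  proof -
    have "u * (u * H h p + 2 * v\<^sup>2 * (p \<bullet> h)) = 0"
      using crit[of h] v(1) by (simp add: field_simps power2_eq_square)
    then show ?thesis
      using u by simp
  qed
  have "u\<^sup>2 * (\<Sum>b\<in>Basis. (H p b)\<^sup>2) = (\<Sum>b\<in>Basis. (u * H b p)\<^sup>2)"
    by (simp add: sum_distrib_left power_mult_distrib H_sym)
  also have "\<dots> = 4 * v^4 * P"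
    unfolding uH P_def power2_norm_eq_sum_Basis[of p]
    by (simp add: sum_distrib_left power_mult_distrib eval_nat_numeral mult_ac)
  finally have "u\<^sup>2 * (\<Sum>b\<in>Basis. (H p b)\<^sup>2) = 4 * v^4 * P" .
  moreover have "u * H p p = - 2 * v\<^sup>2 * P"
    unfolding uH P_def by (simp add: power2_norm_eq_inner)
  moreover have "P \<ge> 0" "(\<Sum>b\<in>Basis. \<Sum>c\<in>Basis. (H b c)\<^sup>2) \<ge> 0"
    unfolding P_def by (simp_all add: sum_nonneg)
  ultimately show ?thesis
    using graph_weight_time_derivative_arith[OF v] bilinear_Cauchy_Schwarz[OF H, of p]
      graph_weight_hessian_trace[OF H J uH[unfolded v_def] hess[unfolded v_def], folded v_def]
    unfolding P_def by auto
qed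


section \<open>Graphical mean curvature flow under the standing assumption\<close>

locale graphical_mcf =
  fixes \<Omega> :: "('a::euclidean_space \<times> real) set" and u :: "'a \<Rightarrow> real \<Rightarrow> real"
  assumes standing: "standing_assumption \<Omega> u"
begin

definition U :: "'a \<times> real \<Rightarrow> real" where "U = (\<lambda>q. u (fst q) (snd q))"

definition D :: "('a \<times> real) list \<Rightarrow> 'a \<times> real \<Rightarrow> real" where "D hs = pderivs U \<Omega> hs"

abbreviation V :: "'a \<times> real \<Rightarrow> real" where "V \<equiv> vfac U \<Omega>"

definition W :: "'a \<times> real \<Rightarrow> real" where "W q = V q * (U q)\<^sup>2"

definition positive_times :: "('a \<times> real) set" where "positive_times = {q\<in>\<Omega>. snd q > 0}"

lemma standing_unfolded:
  "\<Omega> \<subseteq> {q. snd q \<ge> 0} \<and> openin (top_of_set {q. snd q \<ge> 0}) \<Omega>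
   \<and> (\<forall>hs. \<forall>q\<in>\<Omega>. D hs differentiable (at q within \<Omega>))
   \<and> (\<forall>q\<in>\<Omega>. snd q > 0 \<longrightarrow> gmcf_at U \<Omega> q)
   \<and> (\<forall>q0 \<in> closure \<Omega> - \<Omega>. (U \<longlongrightarrow> 0) (at q0 within \<Omega>))
   \<and> (\<forall>T>0. bounded {q\<in>\<Omega>. snd q \<le> T} \<and> (\<forall>hs. \<exists>M. \<forall>q\<in>\<Omega>. snd q \<le> T \<longrightarrow> \<bar>D hs q\<bar> \<le> M))"
  using standing unfolding standing_assumption_def Let_def D_def U_def by auto

lemma time_nonneg: "q \<in> \<Omega> \<Longrightarrow> snd q \<ge> 0"
  using standing_unfolded by auto

lemma D_differentiable: "q \<in> \<Omega> \<Longrightarrow> D hs differentiable (at q within \<Omega>)"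
  using standing_unfolded by blast

lemma mcf_equation: "q \<in> positive_times \<Longrightarrow> gmcf_at U \<Omega> q"
  using standing_unfolded unfolding positive_times_def by blast

lemma U_tendsto_boundary: "q0 \<in> closure \<Omega> - \<Omega> \<Longrightarrow> (U \<longlongrightarrow> 0) (at q0 within \<Omega>)"
  using standing_unfolded by blast

lemma bounded_time_slab: "T > 0 \<Longrightarrow> bounded {q\<in>\<Omega>. snd q \<le> T}"
  using standing_unfolded by blast

lemma D_bounded_time_slab: "T > 0 \<Longrightarrow> \<exists>M. \<forall>q\<in>\<Omega>. snd q \<le> T \<longrightarrow> \<bar>D hs q\<bar> \<le> M"
  using standing_unfolded by blast

lemma open_positive_times: "open positive_times"
proof -
  obtain T where T: "open T" "\<Omega> = {q. snd q \<ge> 0} \<inter> T"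
    using standing_unfolded openin_open by metis
  have "positive_times = T \<inter> {q. 0 < snd q}"
    unfolding positive_times_def using T by auto
  moreover have "open {q :: 'a \<times> real. 0 < snd q}"
    by (intro open_Collect_less continuous_intros)
  ultimately show ?thesis
    using T by auto
qed

lemma positive_times_subset: "positive_times \<subseteq> \<Omega>"
  unfolding positive_times_def by auto

lemma at_within_domain: "q \<in> positive_times \<Longrightarrow> at q within \<Omega> = at q"
  using at_within_open_subset open_positive_times positive_times_subset by blast

lemma D_Nil: "D [] = U"
  unfolding D_def by simp

lemma has_derivative_D:
  assumes "q \<in> positive_times"
  shows "(D hs has_derivative (\<lambda>h. D (h # hs) q)) (at q)"
proof -
  have "(D hs has_derivative frechet_derivative (D hs) (at q within \<Omega>)) (at q within \<Omega>)"
    using D_differentiable assms positive_times_subset frechet_derivative_works by blast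
  then show ?thesis
    using at_within_domain[OF assms] by (simp add: D_def eta_contract_eq)
qed

lemma linear_D: "q \<in> positive_times \<Longrightarrow> linear (\<lambda>h. D (h # hs) q)"
  using has_derivative_D has_derivative_linear by blast

lemma continuous_D: "q \<in> \<Omega> \<Longrightarrow> continuous (at q within \<Omega>) (D hs)"
  using D_differentiable differentiable_imp_continuous_within by blast

lemma D_swap:
  assumes "q \<in> positive_times"
  shows "D (h # k # hs) q = D (k # h # hs) q"
  using second_derivative_symmetric[OF open_positive_times assms, of "D hs" "\<lambda>y z. D (z # hs) y"]
    has_derivative_D assms by blast

lemma D_swap_tail:
  assumes q: "q \<in> positive_times"
  shows "D (h # k # l # hs) q = D (h # l # k # hs) q"
proof -
  have "(D (l # k # hs) has_derivative (\<lambda>z. D (z # k # l # hs) q)) (at q)"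
    by (rule has_derivative_transform_within_open[OF has_derivative_D[OF q] open_positive_times q])
      (use D_swap in auto)
  with has_derivative_D[OF q, of "l # k # hs"] show ?thesis
    using has_derivative_unique by metis
qed


definition grad_norm2 :: "'a \<times> real \<Rightarrow> real" where
  "grad_norm2 q = (\<Sum>b\<in>Basis. (D [(b, 0)] q)\<^sup>2)"

lemma inner_gradx: "b \<in> Basis \<Longrightarrow> gradx U \<Omega> q \<bullet> b = D [(b, 0)] q"
  unfolding gradx_def D_def by (simp add: inner_sum_left inner_Basis if_distrib cong: if_cong)

lemma norm_gradx: "(norm (gradx U \<Omega> q))\<^sup>2 = grad_norm2 q"
  unfolding power2_norm_eq_sum_Basis grad_norm2_def by (simp add: inner_gradx)

lemma vfac_eq: "V q = sqrt (1 + grad_norm2 q)"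
  unfolding vfac_def norm_gradx ..

lemma grad_norm2_nonneg: "grad_norm2 q \<ge> 0"
  unfolding grad_norm2_def by (simp add: sum_nonneg)

lemma vfac_pos: "V q > 0"
  unfolding vfac_eq using grad_norm2_nonneg[of q] by (simp add: add_pos_nonneg)

lemma W_pos_iff: "W q > 0 \<longleftrightarrow> U q \<noteq> 0"
  unfolding W_def using vfac_pos[of q] by (simp add: zero_less_mult_iff)

lemma continuous_U: "q \<in> \<Omega> \<Longrightarrow> continuous (at q within \<Omega>) U"
  using continuous_D[of q "[]"] by (simp add: D_Nil)

lemma continuous_W: "q \<in> \<Omega> \<Longrightarrow> continuous (at q within \<Omega>) W"
  unfolding W_def[abs_def] vfac_eq[abs_def] grad_norm2_def
  by (intro continuous_intros continuous_D continuous_U)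

lemma vfac_bounded_time_slab:
  assumes "T > 0"
  shows "\<exists>C. \<forall>q\<in>\<Omega>. snd q \<le> T \<longrightarrow> V q \<le> C"
proof -
  have "\<forall>b. \<exists>M. \<forall>q\<in>\<Omega>. snd q \<le> T \<longrightarrow> \<bar>D [(b, 0)] q\<bar> \<le> M"
    using D_bounded_time_slab[OF assms] by blast
  then obtain M where M: "\<And>b q. q \<in> \<Omega> \<Longrightarrow> snd q \<le> T \<Longrightarrow> \<bar>D [(b, 0)] q\<bar> \<le> M b"
    by metis
  have "V q \<le> sqrt (1 + (\<Sum>b\<in>Basis. (M b)\<^sup>2))" if "q \<in> \<Omega>" "snd q \<le> T" for q
  proof -
    have "(D [(b, 0)] q)\<^sup>2 \<le> (M b)\<^sup>2" for b
      using M[OF that, of b] abs_le_square_iff by fastforce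
    then show ?thesis
      unfolding vfac_eq grad_norm2_def by (simp add: sum_mono)
  qed
  then show ?thesis
    by blast
qed

lemma closure_time_nonneg: "q \<in> closure \<Omega> \<Longrightarrow> snd q \<ge> 0"
proof -
  have "closed {q :: 'a \<times> real. 0 \<le> snd q}"
    by (intro closed_Collect_le continuous_intros)
  then have "closure \<Omega> \<subseteq> {q. 0 \<le> snd q}"
    using time_nonneg by (intro closure_minimal) auto
  then show "q \<in> closure \<Omega> \<Longrightarrow> snd q \<ge> 0"
    by auto
qed

lemma W_tendsto_boundary:
  assumes q0: "q0 \<in> closure \<Omega> - \<Omega>"
  shows "(W \<longlongrightarrow> 0) (at q0 within \<Omega>)"
proof -
  have "snd q0 + 1 > 0"
    using closure_time_nonneg q0 by (simp add: add_nonneg_pos)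
  then obtain C where C: "\<And>q. q \<in> \<Omega> \<Longrightarrow> snd q \<le> snd q0 + 1 \<Longrightarrow> V q \<le> C"
    using vfac_bounded_time_slab by blast
  have "(snd \<longlongrightarrow> snd q0) (at q0 within \<Omega>)"
    by (intro tendsto_intros)
  then have "eventually (\<lambda>q. snd q < snd q0 + 1) (at q0 within \<Omega>)"
    by (rule order_tendstoD(2)) simp
  moreover have "eventually (\<lambda>q. q \<in> \<Omega>) (at q0 within \<Omega>)"
    by (simp add: eventually_at_filter)
  ultimately have "eventually (\<lambda>q. norm (W q) \<le> C * (U q)\<^sup>2) (at q0 within \<Omega>)"
  proof eventually_elim
    case (elim q)
    have "norm (W q) = V q * (U q)\<^sup>2"
      using vfac_pos[of q] by (simp add: W_def abs_mult)
    also have "\<dots> \<le> C * (U q)\<^sup>2"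
      using C[of q] elim by (simp add: mult_right_mono)
    finally show ?case .
  qed
  moreover have "((\<lambda>q. C * (U q)\<^sup>2) \<longlongrightarrow> 0) (at q0 within \<Omega>)"
    using tendsto_mult_left[OF tendsto_power[OF U_tendsto_boundary[OF q0], of 2], of C] by simp
  ultimately show ?thesis
    by (rule Lim_null_comparison)
qed

definition penalized_superlevel :: "real \<Rightarrow> real \<Rightarrow> real \<Rightarrow> ('a \<times> real) set" where
  "penalized_superlevel T \<epsilon> \<delta> = {q\<in>\<Omega>. snd q \<le> T \<and> U q \<le> 0 \<and> \<delta> \<le> W q - \<epsilon> * snd q}"

lemma limpt_penalized_superlevel_in_domain:
  assumes x: "x islimpt penalized_superlevel T \<epsilon> \<delta>" and \<epsilon>: "\<epsilon> \<ge> 0" and \<delta>: "\<delta> > 0"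
  shows "x \<in> \<Omega>"
proof (rule ccontr)
  let ?F = "at x within penalized_superlevel T \<epsilon> \<delta>"
  assume "x \<notin> \<Omega>"
  moreover have "x \<in> closure \<Omega>"
    using islimpt_subset[OF x] unfolding closure_def penalized_superlevel_def by auto
  ultimately have "(W \<longlongrightarrow> 0) (at x within \<Omega>)"
    by (intro W_tendsto_boundary) simp
  then have "(W \<longlongrightarrow> 0) ?F"
    by (rule tendsto_within_subset) (auto simp: penalized_superlevel_def)
  moreover have "eventually (\<lambda>q. q \<in> penalized_superlevel T \<epsilon> \<delta>) ?F"
    by (simp add: eventually_at_filter)
  then have "eventually (\<lambda>q. \<delta> \<le> W q) ?F"
  proof (rule eventually_mono)
    fix q assume "q \<in> penalized_superlevel T \<epsilon> \<delta>"
    moreover from this have "0 \<le> \<epsilon> * snd q"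
      using \<epsilon> time_nonneg unfolding penalized_superlevel_def by simp
    ultimately show "\<delta> \<le> W q"
      unfolding penalized_superlevel_def by simp
  qed
  ultimately show False
    using x \<delta> tendsto_lowerbound[of W 0 ?F \<delta>] trivial_limit_within by fastforce
qed

lemma closed_penalized_superlevel:
  assumes \<epsilon>: "\<epsilon> \<ge> 0" and \<delta>: "\<delta> > 0"
  shows "closed (penalized_superlevel T \<epsilon> \<delta>)"
  unfolding closed_limpt
proof (intro allI impI)
  let ?K = "penalized_superlevel T \<epsilon> \<delta>"
  fix x assume x: "x islimpt ?K"
  let ?F = "at x within ?K"
  have F: "\<not> trivial_limit ?F"
    using x trivial_limit_within by blast
  have K: "eventually (\<lambda>q. q \<in> ?K) ?F"
    by (simp add: eventually_at_filter)
  have "x \<in> \<Omega>"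
    by (rule limpt_penalized_superlevel_in_domain[OF x \<epsilon> \<delta>])
  have lim: "(f \<longlongrightarrow> l) ?F" if "(f \<longlongrightarrow> l) (at x within \<Omega>)" for f l
    using that by (rule tendsto_within_subset) (auto simp: penalized_superlevel_def)
  have W: "(W \<longlongrightarrow> W x) ?F" and U: "(U \<longlongrightarrow> U x) ?F"
    using continuous_W[OF \<open>x \<in> \<Omega>\<close>] continuous_U[OF \<open>x \<in> \<Omega>\<close>]
    unfolding continuous_within by (auto intro: lim)
  have t: "(snd \<longlongrightarrow> snd x) ?F"
    by (intro tendsto_intros)
  have "snd x \<le> T"
    by (rule tendsto_upperbound[OF t _ F]) (rule eventually_mono[OF K], simp add: penalized_superlevel_def)
  moreover have "U x \<le> 0"
    by (rule tendsto_upperbound[OF U _ F]) (rule eventually_mono[OF K], simp add: penalized_superlevel_def)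
  moreover have "\<delta> \<le> W x - \<epsilon> * snd x"
  proof (rule tendsto_lowerbound[OF _ _ F])
    show "((\<lambda>q. W q - \<epsilon> * snd q) \<longlongrightarrow> W x - \<epsilon> * snd x) ?F"
      by (intro tendsto_intros W t)
    show "eventually (\<lambda>q. \<delta> \<le> W q - \<epsilon> * snd q) ?F"
      by (rule eventually_mono[OF K]) (simp add: penalized_superlevel_def)
  qed
  ultimately show "x \<in> ?K"
    using \<open>x \<in> \<Omega>\<close> by (simp add: penalized_superlevel_def)
qed

lemma compact_penalized_superlevel:
  assumes "T \<ge> 0" "\<epsilon> \<ge> 0" "\<delta> > 0"
  shows "compact (penalized_superlevel T \<epsilon> \<delta>)"
proof (subst compact_eq_bounded_closed, intro conjI closed_penalized_superlevel assms)
  have "bounded {q\<in>\<Omega>. snd q \<le> T + 1}"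
    using assms by (intro bounded_time_slab) simp
  then show "bounded (penalized_superlevel T \<epsilon> \<delta>)"
    by (rule bounded_subset) (auto simp: penalized_superlevel_def)
qed

definition grad_dot_dgrad :: "'a \<times> real \<Rightarrow> 'a \<times> real \<Rightarrow> real" where
  "grad_dot_dgrad q z = (\<Sum>b\<in>Basis. D [(b, 0)] q * D [z, (b, 0)] q)"

lemma has_derivative_U: "q \<in> positive_times \<Longrightarrow> (U has_derivative (\<lambda>z. D [z] q)) (at q)"
  using has_derivative_D[of q "[]"] by (simp add: D_Nil)

lemma has_derivative_grad_norm2:
  assumes q: "q \<in> positive_times"
  shows "(grad_norm2 has_derivative (\<lambda>z. 2 * grad_dot_dgrad q z)) (at q)"
proof -
  have "(grad_norm2 has_derivative (\<lambda>z. \<Sum>b\<in>Basis. 2 * D [(b, 0)] q * D [z, (b, 0)] q)) (at q)"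
    unfolding grad_norm2_def
    by (rule has_derivative_eq_rhs, (rule derivative_intros has_derivative_D[OF q])+)
      (simp add: fun_eq_iff algebra_simps)
  then show ?thesis
    by (simp add: grad_dot_dgrad_def sum_distrib_left mult.assoc)
qed

lemma has_derivative_V:
  assumes q: "q \<in> positive_times"
  shows "(V has_derivative (\<lambda>z. grad_dot_dgrad q z / V q)) (at q)"
proof -
  have pos: "0 < 1 + grad_norm2 q"
    using grad_norm2_nonneg[of q] by simp
  moreover have "((\<lambda>y. 1 + grad_norm2 y) has_derivative (\<lambda>z. 0 + 2 * grad_dot_dgrad q z)) (at q)"
    by (intro derivative_intros has_derivative_grad_norm2 q)
  ultimately have "((\<lambda>y. sqrt (1 + grad_norm2 y)) has_derivative
      (\<lambda>z. (0 + 2 * grad_dot_dgrad q z) * (inverse (sqrt (1 + grad_norm2 q)) / 2))) (at q)"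
    by (rule has_derivative_real_sqrt)
  then show ?thesis
    unfolding vfac_eq[abs_def]
    by (rule has_derivative_eq_rhs) (use pos in \<open>simp add: fun_eq_iff field_simps\<close>)
qed

definition dW :: "'a \<times> real \<Rightarrow> 'a \<times> real \<Rightarrow> real" where
  "dW q z = grad_dot_dgrad q z / V q * (U q)\<^sup>2 + V q * (2 * U q * D [z] q)"

lemma has_derivative_W:
  assumes q: "q \<in> positive_times"
  shows "(W has_derivative dW q) (at q)"
  unfolding W_def[abs_def] dW_def[abs_def]
  by (rule has_derivative_eq_rhs, (rule derivative_intros has_derivative_V[OF q] has_derivative_U[OF q])+)
    (simp add: fun_eq_iff algebra_simps)


definition hess_grad_grad :: "'a \<times> real \<Rightarrow> real" where
  "hess_grad_grad q = (\<Sum>b\<in>Basis. \<Sum>c\<in>Basis. D [(b, 0)] q * D [(c, 0)] q * D [(b, 0), (c, 0)] q)"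

definition mcf_speed :: "'a \<times> real \<Rightarrow> real" where
  "mcf_speed q = (\<Sum>b\<in>Basis. D [(b, 0), (b, 0)] q) - hess_grad_grad q / (1 + grad_norm2 q)"

text \<open>The flow in non-divergence form: \<open>u\<^sub>t = \<Delta>u - D\<^sup>2u(Du, Du) / v\<^sup>2\<close>.\<close>

lemma D_time_eq_mcf_speed:
  assumes q: "q \<in> positive_times"
  shows "D [(0, 1)] q = mcf_speed q"
proof -
  have V: "V q \<noteq> 0" "(V q)\<^sup>2 = 1 + grad_norm2 q"
    using vfac_pos[of q] grad_norm2_nonneg[of q] by (simp_all add: vfac_eq)
  have div: "frechet_derivative (\<lambda>y. D [(b, 0)] y / V y) (at q) (b, 0)
     = D [(b, 0), (b, 0)] q / V q - D [(b, 0)] q * grad_dot_dgrad q (b, 0) / (V q)^3" for b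
  proof -
    have "((\<lambda>y. D [(b, 0)] y / V y) has_derivative
        (\<lambda>z. D [z, (b, 0)] q / V q - D [(b, 0)] q * grad_dot_dgrad q z / (V q)^3)) (at q)"
      by (rule has_derivative_eq_rhs[OF has_derivative_divide[OF has_derivative_D[OF q] has_derivative_V[OF q] V(1)]])
        (use V(1) in \<open>simp add: fun_eq_iff field_simps power3_eq_cube\<close>)
    then have "(\<lambda>z. D [z, (b, 0)] q / V q - D [(b, 0)] q * grad_dot_dgrad q z / (V q)^3)
        = frechet_derivative (\<lambda>y. D [(b, 0)] y / V y) (at q)"
      by (rule frechet_derivative_at)
    from fun_cong[OF this, of "(b, 0)"] show ?thesis
      by simp
  qed
  have "D [(0, 1)] q = V q * (\<Sum>b\<in>Basis. frechet_derivative (\<lambda>y. D [(b, 0)] y / V y) (at q) (b, 0))"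
    using mcf_equation[OF q] unfolding gmcf_at_def D_def[symmetric] at_within_domain[OF q] .
  also have "\<dots> = (\<Sum>b\<in>Basis. D [(b, 0), (b, 0)] q - D [(b, 0)] q * grad_dot_dgrad q (b, 0) / (V q)\<^sup>2)"
    unfolding div sum_distrib_left using V(1)
    by (intro sum.cong refl) (simp add: field_simps power3_eq_cube power2_eq_square)
  also have "\<dots> = (\<Sum>b\<in>Basis. D [(b, 0), (b, 0)] q) - (\<Sum>b\<in>Basis. D [(b, 0)] q * grad_dot_dgrad q (b, 0)) / (V q)\<^sup>2"
    by (simp add: sum_subtractf sum_divide_distrib)
  also have "(\<Sum>b\<in>Basis. D [(b, 0)] q * grad_dot_dgrad q (b, 0)) = hess_grad_grad q"
    unfolding grad_dot_dgrad_def hess_grad_grad_def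
    by (simp add: sum_distrib_left mult.assoc)
  finally show ?thesis
    unfolding mcf_speed_def V(2) .
qed


definition d_hess_grad_grad :: "'a \<times> real \<Rightarrow> 'a \<times> real \<Rightarrow> real" where
  "d_hess_grad_grad q z = (\<Sum>b\<in>Basis. \<Sum>c\<in>Basis.
     D [(b, 0)] q * D [(c, 0)] q * D [z, (b, 0), (c, 0)] q
     + (D [(b, 0)] q * D [z, (c, 0)] q + D [z, (b, 0)] q * D [(c, 0)] q) * D [(b, 0), (c, 0)] q)"

definition d_mcf_speed :: "'a \<times> real \<Rightarrow> 'a \<times> real \<Rightarrow> real" where
  "d_mcf_speed q z = (\<Sum>b\<in>Basis. D [z, (b, 0), (b, 0)] q)
     - (d_hess_grad_grad q z * (1 + grad_norm2 q) - hess_grad_grad q * (2 * grad_dot_dgrad q z))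
       / ((1 + grad_norm2 q) * (1 + grad_norm2 q))"

lemma has_derivative_mcf_speed:
  assumes q: "q \<in> positive_times"
  shows "(mcf_speed has_derivative d_mcf_speed q) (at q)"
proof -
  have nz: "1 + grad_norm2 q \<noteq> 0"
    using grad_norm2_nonneg[of q] by simp
  have "(hess_grad_grad has_derivative d_hess_grad_grad q) (at q)"
    unfolding hess_grad_grad_def[abs_def] d_hess_grad_grad_def[abs_def]
    by (intro has_derivative_sum has_derivative_mult has_derivative_D q)
  moreover have "((\<lambda>y. 1 + grad_norm2 y) has_derivative (\<lambda>z. 0 + 2 * grad_dot_dgrad q z)) (at q)"
    by (intro has_derivative_add has_derivative_const has_derivative_grad_norm2 q)
  ultimately have "((\<lambda>y. hess_grad_grad y / (1 + grad_norm2 y)) has_derivative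
      (\<lambda>z. (d_hess_grad_grad q z * (1 + grad_norm2 q) - hess_grad_grad q * (0 + 2 * grad_dot_dgrad q z))
        / ((1 + grad_norm2 q) * (1 + grad_norm2 q)))) (at q)"
    using nz by (rule has_derivative_divide')
  then show ?thesis
    unfolding mcf_speed_def[abs_def] d_mcf_speed_def[abs_def]
    by (intro has_derivative_diff has_derivative_sum has_derivative_D q) simp
qed

lemma D_time_gradient:
  assumes q: "q \<in> positive_times"
  shows "D [z, (0, 1)] q = d_mcf_speed q z"
proof -
  have "(mcf_speed has_derivative (\<lambda>z. D [z, (0, 1)] q)) (at q)"
    by (rule has_derivative_transform_within_open[OF has_derivative_D[OF q] open_positive_times q])
      (use D_time_eq_mcf_speed in auto)
  with has_derivative_mcf_speed[OF q] show ?thesis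
    using has_derivative_unique by metis
qed

definition d2W :: "'a \<times> real \<Rightarrow> 'a \<times> real \<Rightarrow> 'a \<times> real \<Rightarrow> real" where
  "d2W q z z' = ((\<Sum>b\<in>Basis. D [(b, 0)] q * D [z', z, (b, 0)] q + D [z', (b, 0)] q * D [z, (b, 0)] q) * V q
       - grad_dot_dgrad q z * (grad_dot_dgrad q z' / V q)) / (V q * V q) * (U q)\<^sup>2
     + grad_dot_dgrad q z / V q * (2 * U q * D [z'] q) + grad_dot_dgrad q z' / V q * (2 * U q * D [z] q)
     + V q * (2 * (D [z'] q * D [z] q + U q * D [z', z] q))"

lemma has_derivative_dW:
  assumes q: "q \<in> positive_times"
  shows "((\<lambda>y. dW y z) has_derivative d2W q z) (at q)"
proof -
  have V: "V q \<noteq> 0"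
    using vfac_pos[of q] by simp
  have "((\<lambda>y. grad_dot_dgrad y z) has_derivative
      (\<lambda>z'. \<Sum>b\<in>Basis. D [(b, 0)] q * D [z', z, (b, 0)] q + D [z', (b, 0)] q * D [z, (b, 0)] q)) (at q)"
    unfolding grad_dot_dgrad_def by (intro has_derivative_sum has_derivative_mult has_derivative_D q)
  from has_derivative_divide'[OF this has_derivative_V[OF q] V] show ?thesis
    unfolding dW_def[abs_def] d2W_def
    by (rule has_derivative_eq_rhs[OF has_derivative_add[OF has_derivative_mult[OF _ has_derivative_power[OF has_derivative_U[OF q]]]
          has_derivative_mult[OF has_derivative_V[OF q] has_derivative_mult[OF has_derivative_mult[OF has_derivative_const has_derivative_U[OF q]] has_derivative_D[OF q]]]]])
      (simp add: fun_eq_iff algebra_simps)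
qed


lemma linear_D_spatial:
  assumes "q \<in> positive_times"
  shows "linear (\<lambda>y. D ((y, 0) # hs) q)"
  using linear_pair_left[OF linear_D[OF assms, of hs]] by simp

lemma D_spatial_eq_inner:
  assumes q: "q \<in> positive_times"
  shows "D [(h, 0)] q = gradx U \<Omega> q \<bullet> h"
proof -
  have "D [(h, 0)] q = (\<Sum>b\<in>Basis. (h \<bullet> b) * D [(b, 0)] q)"
    using linear_sum_Basis[OF linear_D_spatial[OF q, of "[]"], of h] by simp
  also have "\<dots> = (\<Sum>b\<in>Basis. (gradx U \<Omega> q \<bullet> b) * (h \<bullet> b))"
    by (rule sum.cong) (simp_all add: inner_gradx)
  also have "\<dots> = gradx U \<Omega> q \<bullet> h"
    by (rule euclidean_inner[symmetric])
  finally show ?thesis .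
qed

lemma bilinear_spatial_hessian:
  assumes q: "q \<in> positive_times"
  shows "bilinear (\<lambda>y z. D [(y, 0), (z, 0)] q)"
proof -
  have "(\<lambda>z. D [(y, 0), (z, 0)] q) = (\<lambda>z. D [(z, 0), (y, 0)] q)" for y
    by (rule ext, rule D_swap[OF q])
  then show ?thesis
    unfolding bilinear_def using linear_D_spatial[OF q] by metis
qed

lemma bilinear_spatial_third_derivative:
  assumes q: "q \<in> positive_times"
  shows "bilinear (\<lambda>y z. D [(w, 0), (y, 0), (z, 0)] q)"
proof -
  have "(\<lambda>y. D [(w, 0), (y, 0), (z, 0)] q) = (\<lambda>y. D [(y, 0), (w, 0), (z, 0)] q)" for z
    by (rule ext, rule D_swap[OF q])
  moreover have "(\<lambda>z. D [(w, 0), (y, 0), (z, 0)] q) = (\<lambda>z. D [(z, 0), (w, 0), (y, 0)] q)" for y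
    by (rule ext, subst D_swap_tail[OF q], rule D_swap[OF q])
  ultimately show ?thesis
    unfolding bilinear_def using linear_D_spatial[OF q] by metis
qed

lemma W_spatial_max_conditions:
  assumes q: "q \<in> positive_times" and r: "r > 0" "ball q r \<subseteq> positive_times"
    and max: "\<And>y. y \<in> ball q r \<Longrightarrow> snd y = snd q \<Longrightarrow> W y \<le> W q"
  shows "dW q (h, 0) = 0" and "d2W q (h, 0) (h, 0) \<le> 0"
proof -
  define k where "k = (h, 0 :: real)"
  define d where "d = r / (norm h + 1)"
  have n: "norm h + 1 > 0"
    by (simp add: add_nonneg_pos)
  then have d: "d > 0"
    unfolding d_def using r by simp
  have near: "q + s *\<^sub>R k \<in> ball q r" if "\<bar>s\<bar> < d" for s
  proof -
    have "dist q (q + s *\<^sub>R k) = \<bar>s\<bar> * norm h"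
      by (simp add: dist_norm k_def norm_Pair)
    also have "\<dots> \<le> \<bar>s\<bar> * (norm h + 1)"
      by (simp add: mult_left_mono)
    also have "\<dots> < d * (norm h + 1)"
      using that n by (simp add: mult_strict_right_mono)
    also have "\<dots> = r"
      unfolding d_def using n by simp
    finally show ?thesis
      by simp
  qed
  have max': "W (q + s *\<^sub>R k) \<le> W (q + 0 *\<^sub>R k)" if "\<bar>s\<bar> < d" for s
    using max near[OF that] unfolding k_def by (simp flip: zero_prod_def)
  have der: "((\<lambda>s. W (q + s *\<^sub>R k)) has_real_derivative dW (q + s *\<^sub>R k) k) (at s)"
    if "\<bar>s\<bar> < d" for s
    using near[OF that] r by (intro has_real_derivative_along_line has_derivative_W) auto
  have der2: "((\<lambda>s. dW (q + s *\<^sub>R k) k) has_real_derivative d2W q k k) (at 0)"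
    using has_derivative_dW[OF q] by (intro has_real_derivative_along_line) simp
  note conditions = derivative_nonpos_at_local_max[OF d max' der der2]
  show "dW q (h, 0) = 0" and "d2W q (h, 0) (h, 0) \<le> 0"
    using conditions unfolding k_def by (simp_all flip: zero_prod_def)
qed

lemma W_time_max_condition:
  assumes q: "q \<in> positive_times" and r: "r > 0"
    and max: "\<And>y. y \<in> ball q r \<Longrightarrow> snd y \<le> snd q \<Longrightarrow> W y - \<epsilon> * snd y \<le> W q - \<epsilon> * snd q"
  shows "\<epsilon> \<le> dW q (0, 1)"
proof -
  define k where "k = (0 :: 'a, 1 :: real)"
  have "((\<lambda>s. W (q + s *\<^sub>R k)) has_real_derivative dW q k) (at 0)"
    using has_derivative_W[OF q] by (intro has_real_derivative_along_line) simp
  moreover have "((\<lambda>s. \<epsilon> * (snd q + s)) has_real_derivative \<epsilon>) (at 0)"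
    by (auto intro!: derivative_eq_intros)
  ultimately have "((\<lambda>s. W (q + s *\<^sub>R k) - \<epsilon> * (snd q + s)) has_real_derivative dW q k - \<epsilon>) (at 0)"
    by (rule DERIV_diff)
  moreover have "W (q + s *\<^sub>R k) - \<epsilon> * (snd q + s) \<le> W (q + 0 *\<^sub>R k) - \<epsilon> * (snd q + 0)"
    if "0 - r < s" "s < 0" for s
    using max[of "q + s *\<^sub>R k"] that by (simp add: k_def dist_norm norm_Pair flip: zero_prod_def)
  ultimately have "dW q k - \<epsilon> \<ge> 0"
    by (intro derivative_nonneg_at_left_max[OF _ r]) auto
  then show ?thesis
    unfolding k_def by simp
qed


lemma sum_Basis_D_spatial:
  assumes q: "q \<in> positive_times"
  shows "(\<Sum>b\<in>Basis. D [(b, 0)] q * D ((b, 0) # hs) q) = D ((gradx U \<Omega> q, 0) # hs) q"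
proof -
  have "(\<Sum>b\<in>Basis. D [(b, 0)] q * D ((b, 0) # hs) q)
      = (\<Sum>b\<in>Basis. (gradx U \<Omega> q \<bullet> b) * D ((b, 0) # hs) q)"
    by (rule sum.cong) (simp_all add: inner_gradx)
  also have "\<dots> = D ((gradx U \<Omega> q, 0) # hs) q"
    by (rule linear_sum_Basis[OF linear_D_spatial[OF q]])
  finally show ?thesis .
qed

lemma grad_dot_dgrad_spatial:
  assumes q: "q \<in> positive_times"
  shows "grad_dot_dgrad q (h, 0) = D [(h, 0), (gradx U \<Omega> q, 0)] q"
proof -
  have "D [(h, 0), (b, 0)] q = D [(b, 0), (h, 0)] q" for b
    by (rule D_swap[OF q])
  then show ?thesis
    unfolding grad_dot_dgrad_def using sum_Basis_D_spatial[OF q, of "[(h, 0)]"] D_swap[OF q] by simp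
qed

lemma dW_spatial:
  assumes q: "q \<in> positive_times"
  shows "dW q (h, 0) = (U q)\<^sup>2 / V q * D [(h, 0), (gradx U \<Omega> q, 0)] q
    + 2 * U q * V q * (gradx U \<Omega> q \<bullet> h)"
  unfolding dW_def grad_dot_dgrad_spatial[OF q] D_spatial_eq_inner[OF q] by simp

lemma d2W_spatial:
  assumes q: "q \<in> positive_times"
  defines "p \<equiv> gradx U \<Omega> q" and "H \<equiv> \<lambda>y z. D [(y, 0), (z, 0)] q"
  shows "d2W q (h, 0) (h, 0) = (U q)\<^sup>2 / V q * (\<Sum>c\<in>Basis. (H h c)\<^sup>2)
    + (U q)\<^sup>2 / V q * D [(p, 0), (h, 0), (h, 0)] q - (U q)\<^sup>2 / V q ^ 3 * (H h p)\<^sup>2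
    + 4 * U q / V q * ((p \<bullet> h) * H h p) + 2 * V q * (p \<bullet> h)\<^sup>2 + 2 * U q * V q * H h h"
proof -
  have "D [(h, 0), (h, 0), (b, 0)] q = D [(b, 0), (h, 0), (h, 0)] q" for b
    using D_swap_tail[OF q] D_swap[OF q] by metis
  then have "(\<Sum>b\<in>Basis. D [(b, 0)] q * D [(h, 0), (h, 0), (b, 0)] q) = D [(p, 0), (h, 0), (h, 0)] q"
    unfolding p_def using sum_Basis_D_spatial[OF q, of "[(h, 0), (h, 0)]"] by simp
  moreover have "V q \<noteq> 0"
    using vfac_pos[of q] by simp
  ultimately show ?thesis
    unfolding d2W_def grad_dot_dgrad_spatial[OF q] D_spatial_eq_inner[OF q] sum.distrib H_def p_def
    by (simp add: field_simps power2_eq_square power3_eq_cube)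
qed



lemma sum_Basis_D_spatial_last:
  assumes q: "q \<in> positive_times"
  defines "p \<equiv> gradx U \<Omega> q"
  shows "(\<Sum>b\<in>Basis. D [(b, 0)] q * D [(y, 0), (b, 0)] q) = D [(y, 0), (p, 0)] q"
    and "(\<Sum>b\<in>Basis. D [(b, 0)] q * D [(y, 0), (z, 0), (b, 0)] q) = D [(y, 0), (z, 0), (p, 0)] q"
proof -
  have "(\<Sum>b\<in>Basis. D [(b, 0)] q * D [(y, 0), (b, 0)] q) = (\<Sum>b\<in>Basis. D [(b, 0)] q * D [(b, 0), (y, 0)] q)"
    by (intro sum.cong refl arg_cong2[where f="(*)"] D_swap[OF q])
  also have "\<dots> = D [(p, 0), (y, 0)] q"
    unfolding sum_Basis_D_spatial[OF q] p_def ..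
  also have "\<dots> = D [(y, 0), (p, 0)] q"
    by (rule D_swap[OF q])
  finally show "(\<Sum>b\<in>Basis. D [(b, 0)] q * D [(y, 0), (b, 0)] q) = D [(y, 0), (p, 0)] q" .
  have "D [(y, 0), (z, 0), (b, 0)] q = D [(b, 0), (y, 0), (z, 0)] q" for b
    using D_swap_tail[OF q, of "(y, 0)" "(z, 0)" "(b, 0)" "[]"] D_swap[OF q, of "(y, 0)" "(b, 0)" "[(z, 0)]"]
    by simp
  then have "(\<Sum>b\<in>Basis. D [(b, 0)] q * D [(y, 0), (z, 0), (b, 0)] q)
      = (\<Sum>b\<in>Basis. D [(b, 0)] q * D [(b, 0), (y, 0), (z, 0)] q)"
    by (intro sum.cong refl) simp
  also have "\<dots> = D [(p, 0), (y, 0), (z, 0)] q"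
    unfolding sum_Basis_D_spatial[OF q] p_def ..
  also have "\<dots> = D [(y, 0), (z, 0), (p, 0)] q"
    using D_swap_tail[OF q, of "(y, 0)" "(p, 0)" "(z, 0)" "[]"] D_swap[OF q, of "(p, 0)" "(y, 0)" "[(z, 0)]"]
    by simp
  finally show "(\<Sum>b\<in>Basis. D [(b, 0)] q * D [(y, 0), (z, 0), (b, 0)] q) = D [(y, 0), (z, 0), (p, 0)] q" .
qed

lemma hess_grad_grad_eq:
  assumes q: "q \<in> positive_times"
  defines "p \<equiv> gradx U \<Omega> q"
  shows "hess_grad_grad q = D [(p, 0), (p, 0)] q"
proof -
  have "hess_grad_grad q = (\<Sum>b\<in>Basis. D [(b, 0)] q * (\<Sum>c\<in>Basis. D [(c, 0)] q * D [(b, 0), (c, 0)] q))"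
    unfolding hess_grad_grad_def by (simp add: sum_distrib_left mult_ac)
  also have "\<dots> = (\<Sum>b\<in>Basis. D [(b, 0)] q * D [(b, 0), (p, 0)] q)"
    unfolding sum_Basis_D_spatial_last(1)[OF q] p_def ..
  also have "\<dots> = D [(p, 0), (p, 0)] q"
    unfolding sum_Basis_D_spatial[OF q] p_def ..
  finally show ?thesis .
qed

lemma d_hess_grad_grad_eq:
  assumes q: "q \<in> positive_times"
  defines "p \<equiv> gradx U \<Omega> q"
  shows "d_hess_grad_grad q (p, 0) = D [(p, 0), (p, 0), (p, 0)] q + 2 * (\<Sum>b\<in>Basis. (D [(p, 0), (b, 0)] q)\<^sup>2)"
proof -
  have "(\<Sum>b\<in>Basis. \<Sum>c\<in>Basis. D [(b, 0)] q * D [(c, 0)] q * D [(p, 0), (b, 0), (c, 0)] q)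
      = (\<Sum>b\<in>Basis. D [(b, 0)] q * (\<Sum>c\<in>Basis. D [(c, 0)] q * D [(p, 0), (b, 0), (c, 0)] q))"
    by (simp add: sum_distrib_left mult.assoc)
  also have "\<dots> = (\<Sum>b\<in>Basis. D [(b, 0)] q * D [(p, 0), (b, 0), (p, 0)] q)"
    unfolding sum_Basis_D_spatial_last(2)[OF q] p_def ..
  also have "\<dots> = (\<Sum>b\<in>Basis. D [(b, 0)] q * D [(p, 0), (p, 0), (b, 0)] q)"
    using D_swap_tail[OF q, of "(p, 0)" "(p, 0)" _ "[]"] by simp
  also have "\<dots> = D [(p, 0), (p, 0), (p, 0)] q"
    unfolding sum_Basis_D_spatial_last(2)[OF q] p_def ..
  finally have J: "(\<Sum>b\<in>Basis. \<Sum>c\<in>Basis. D [(b, 0)] q * D [(c, 0)] q * D [(p, 0), (b, 0), (c, 0)] q)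
      = D [(p, 0), (p, 0), (p, 0)] q" .
  have "(\<Sum>b\<in>Basis. \<Sum>c\<in>Basis. D [(b, 0)] q * D [(p, 0), (c, 0)] q * D [(b, 0), (c, 0)] q)
      = (\<Sum>c\<in>Basis. \<Sum>b\<in>Basis. D [(b, 0)] q * D [(p, 0), (c, 0)] q * D [(b, 0), (c, 0)] q)"
    by (rule sum.swap)
  also have "\<dots> = (\<Sum>c\<in>Basis. D [(p, 0), (c, 0)] q * (\<Sum>b\<in>Basis. D [(b, 0)] q * D [(b, 0), (c, 0)] q))"
    by (simp add: sum_distrib_left mult_ac)
  also have "\<dots> = (\<Sum>c\<in>Basis. (D [(p, 0), (c, 0)] q)\<^sup>2)"
    unfolding sum_Basis_D_spatial[OF q] p_def by (simp add: power2_eq_square)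
  finally have H1: "(\<Sum>b\<in>Basis. \<Sum>c\<in>Basis. D [(b, 0)] q * D [(p, 0), (c, 0)] q * D [(b, 0), (c, 0)] q)
      = (\<Sum>c\<in>Basis. (D [(p, 0), (c, 0)] q)\<^sup>2)" .
  have "(\<Sum>b\<in>Basis. \<Sum>c\<in>Basis. D [(p, 0), (b, 0)] q * D [(c, 0)] q * D [(b, 0), (c, 0)] q)
      = (\<Sum>b\<in>Basis. D [(p, 0), (b, 0)] q * (\<Sum>c\<in>Basis. D [(c, 0)] q * D [(b, 0), (c, 0)] q))"
    by (simp add: sum_distrib_left mult.assoc)
  also have "\<dots> = (\<Sum>b\<in>Basis. D [(p, 0), (b, 0)] q * D [(b, 0), (p, 0)] q)"
    unfolding sum_Basis_D_spatial_last(1)[OF q] p_def ..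
  also have "\<dots> = (\<Sum>b\<in>Basis. (D [(p, 0), (b, 0)] q)\<^sup>2)"
    using D_swap[OF q, of _ "(p, 0)" "[]"] by (simp add: power2_eq_square)
  finally have H2: "(\<Sum>b\<in>Basis. \<Sum>c\<in>Basis. D [(p, 0), (b, 0)] q * D [(c, 0)] q * D [(b, 0), (c, 0)] q)
      = (\<Sum>b\<in>Basis. (D [(p, 0), (b, 0)] q)\<^sup>2)" .
  have "d_hess_grad_grad q (p, 0)
      = (\<Sum>b\<in>Basis. \<Sum>c\<in>Basis. D [(b, 0)] q * D [(c, 0)] q * D [(p, 0), (b, 0), (c, 0)] q)
      + (\<Sum>b\<in>Basis. \<Sum>c\<in>Basis. D [(b, 0)] q * D [(p, 0), (c, 0)] q * D [(b, 0), (c, 0)] q)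
      + (\<Sum>b\<in>Basis. \<Sum>c\<in>Basis. D [(p, 0), (b, 0)] q * D [(c, 0)] q * D [(b, 0), (c, 0)] q)"
    unfolding d_hess_grad_grad_def by (simp add: sum.distrib algebra_simps)
  then show ?thesis
    unfolding J H1 H2 by simp
qed


lemma dW_time:
  assumes q: "q \<in> positive_times"
  defines "p \<equiv> gradx U \<Omega> q" and "H \<equiv> \<lambda>y z. D [(y, 0), (z, 0)] q"
    and "J \<equiv> \<lambda>y z. D [(gradx U \<Omega> q, 0), (y, 0), (z, 0)] q"
  shows "dW q (0, 1) = (U q)\<^sup>2 / V q * ((\<Sum>b\<in>Basis. J b b) - (2 * (\<Sum>b\<in>Basis. (H p b)\<^sup>2) + J p p) / (V q)\<^sup>2
      + 2 * (H p p)\<^sup>2 / V q ^ 4) + 2 * U q * V q * ((\<Sum>b\<in>Basis. H b b) - H p p / (V q)\<^sup>2)"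
proof -
  have V: "V q \<noteq> 0" "1 + grad_norm2 q = (V q)\<^sup>2"
    using vfac_pos[of q] grad_norm2_nonneg[of q] by (simp_all add: vfac_eq)
  have "grad_dot_dgrad q (0, 1) = (\<Sum>b\<in>Basis. D [(b, 0)] q * D [(b, 0), (0, 1)] q)"
    unfolding grad_dot_dgrad_def by (intro sum.cong refl arg_cong2[where f="(*)"] D_swap[OF q])
  also have "\<dots> = d_mcf_speed q (p, 0)"
    using sum_Basis_D_spatial[OF q, of "[(0, 1)]"] D_time_gradient[OF q] unfolding p_def by simp
  also have "\<dots> = (\<Sum>b\<in>Basis. J b b) - (2 * (\<Sum>b\<in>Basis. (H p b)\<^sup>2) + J p p) / (V q)\<^sup>2 + 2 * (H p p)\<^sup>2 / V q ^ 4"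
    unfolding d_mcf_speed_def d_hess_grad_grad_eq[OF q, folded p_def] hess_grad_grad_eq[OF q, folded p_def]
      grad_dot_dgrad_spatial[OF q, folded p_def] V(2) H_def J_def
    using V(1) by (simp add: field_simps eval_nat_numeral p_def)
  finally have A: "grad_dot_dgrad q (0, 1) = (\<Sum>b\<in>Basis. J b b)
      - (2 * (\<Sum>b\<in>Basis. (H p b)\<^sup>2) + J p p) / (V q)\<^sup>2 + 2 * (H p p)\<^sup>2 / V q ^ 4" .
  have T: "D [(0, 1)] q = (\<Sum>b\<in>Basis. H b b) - H p p / (V q)\<^sup>2"
    unfolding D_time_eq_mcf_speed[OF q] mcf_speed_def hess_grad_grad_eq[OF q, folded p_def] V(2) H_def ..
  show ?thesis
    unfolding dW_def A T using V(1) by (simp add: field_simps eval_nat_numeral)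
qed


lemma no_interior_penalized_max:
  assumes q: "q \<in> positive_times" and U: "U q < 0" and \<epsilon>: "\<epsilon> > 0"
    and r: "r > 0" "ball q r \<subseteq> positive_times"
    and max: "\<And>y. y \<in> ball q r \<Longrightarrow> snd y \<le> snd q \<Longrightarrow> W y - \<epsilon> * snd y \<le> W q - \<epsilon> * snd q"
  shows False
proof -
  define p where "p = gradx U \<Omega> q"
  define H where "H y z = D [(y, 0), (z, 0)] q" for y z
  define J where "J y z = D [(p, 0), (y, 0), (z, 0)] q" for y z
  have v: "sqrt (1 + (norm p)\<^sup>2) = V q"
    unfolding vfac_def p_def ..
  have "\<And>y. y \<in> ball q r \<Longrightarrow> snd y = snd q \<Longrightarrow> W y \<le> W q"
    using max by force
  note spatial = W_spatial_max_conditions[OF q r this]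
  have "bilinear H" "bilinear J" "\<And>y z. H y z = H z y"
    unfolding H_def[abs_def] J_def[abs_def]
    by (rule bilinear_spatial_hessian[OF q], rule bilinear_spatial_third_derivative[OF q], rule D_swap[OF q])
  from graph_weight_time_derivative_nonpos[OF this(1) this(3) this(2) U, of p, unfolded v]
  have "dW q (0, 1) \<le> 0"
    using spatial dW_spatial[OF q] d2W_spatial[OF q] dW_time[OF q]
    unfolding H_def J_def p_def by simp
  moreover have "\<epsilon> \<le> dW q (0, 1)"
    using W_time_max_condition[OF q r(1) max] .
  ultimately show False
    using \<epsilon> by simp
qed


lemma penalized_max_exists:
  assumes "T \<ge> 0" "\<epsilon> \<ge> 0" "\<delta> > 0" and q0: "q0 \<in> penalized_superlevel T \<epsilon> \<delta>"
  obtains qs where "qs \<in> penalized_superlevel T \<epsilon> \<delta>"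
    and "\<And>y. y \<in> penalized_superlevel T \<epsilon> \<delta> \<Longrightarrow> W y - \<epsilon> * snd y \<le> W qs - \<epsilon> * snd qs"
proof -
  have "continuous_on (penalized_superlevel T \<epsilon> \<delta>) (\<lambda>q. W q - \<epsilon> * snd q)"
    unfolding continuous_on_eq_continuous_within penalized_superlevel_def
    by (auto intro!: continuous_intros continuous_within_subset[OF continuous_W])
  moreover have "compact (penalized_superlevel T \<epsilon> \<delta>)"
    by (rule compact_penalized_superlevel[OF assms(1-3)])
  ultimately show ?thesis
    using continuous_attains_sup[of "penalized_superlevel T \<epsilon> \<delta>" "\<lambda>q. W q - \<epsilon> * snd q"] q0 that
    by blast
qed

lemma U_negative_on_penalized_superlevel:
  assumes "\<epsilon> \<ge> 0" "\<delta> > 0" "q \<in> penalized_superlevel T \<epsilon> \<delta>"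
  shows "U q < 0"
proof -
  have "0 \<le> \<epsilon> * snd q"
    using assms time_nonneg unfolding penalized_superlevel_def by simp
  then have "W q > 0"
    using assms unfolding penalized_superlevel_def by simp
  then have "U q \<noteq> 0"
    using W_pos_iff by blast
  then show ?thesis
    using assms(3) unfolding penalized_superlevel_def by auto
qed

lemma U_negative_near:
  assumes q: "q \<in> positive_times" and "U q < 0"
  obtains r where "r > 0" "ball q r \<subseteq> positive_times" "\<And>y. y \<in> ball q r \<Longrightarrow> U y < 0"
proof -
  obtain r1 where r1: "r1 > 0" "ball q r1 \<subseteq> positive_times"
    using open_positive_times q open_contains_ball by blast
  have "isCont U q"
    using continuous_U[of q] q positive_times_subset at_within_domain[OF q] by (auto simp: continuous_at)
  then have "eventually (\<lambda>y. U y < 0) (at q)"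
    unfolding isCont_def using assms(2) order_tendstoD(2) by blast
  then obtain r2 where r2: "r2 > 0" "\<And>y. y \<noteq> q \<Longrightarrow> dist y q < r2 \<Longrightarrow> U y < 0"
    unfolding eventually_at by blast
  show ?thesis
  proof (rule that[of "min r1 r2"])
    show "min r1 r2 > 0" "ball q (min r1 r2) \<subseteq> positive_times"
      using r1 r2 by auto
    show "U y < 0" if "y \<in> ball q (min r1 r2)" for y
      using that r2 assms(2) by (cases "y = q") (simp_all add: dist_commute)
  qed
qed


lemma no_interior_max_on_penalized_superlevel:
  assumes \<epsilon>: "\<epsilon> > 0" and \<delta>: "\<delta> > 0" and qs: "qs \<in> penalized_superlevel T \<epsilon> \<delta>"
    and qs_max: "\<And>y. y \<in> penalized_superlevel T \<epsilon> \<delta> \<Longrightarrow> W y - \<epsilon> * snd y \<le> W qs - \<epsilon> * snd qs"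
    and qs_pos: "qs \<in> positive_times"
  shows False
proof -
  have Uqs: "U qs < 0"
    using U_negative_on_penalized_superlevel[OF less_imp_le[OF \<epsilon>] \<delta> qs] .
  obtain r where r: "r > 0" "ball qs r \<subseteq> positive_times" and neg: "\<And>y. y \<in> ball qs r \<Longrightarrow> U y < 0"
    using U_negative_near[OF qs_pos Uqs] by blast
  have "W y - \<epsilon> * snd y \<le> W qs - \<epsilon> * snd qs" if y: "y \<in> ball qs r" "snd y \<le> snd qs" for y
  proof (cases "\<delta> \<le> W y - \<epsilon> * snd y")
    case True
    moreover have "y \<in> \<Omega>"
      using y(1) r(2) positive_times_subset by blast
    ultimately have "y \<in> penalized_superlevel T \<epsilon> \<delta>"
      using y(2) qs neg[OF y(1)] unfolding penalized_superlevel_def by simp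
    then show ?thesis
      by (rule qs_max)
  next
    case False
    then show ?thesis
      using qs unfolding penalized_superlevel_def by simp
  qed
  then show False
    using no_interior_penalized_max[OF qs_pos Uqs \<epsilon> r] by blast
qed

lemma W_le_initial_bound:
  assumes c: "c \<ge> 0" and init: "\<And>y. (y, 0) \<in> \<Omega> \<Longrightarrow> U (y, 0) < 0 \<Longrightarrow> W (y, 0) \<le> c"
    and q0: "q0 \<in> \<Omega>" "U q0 < 0"
  shows "W q0 \<le> c"
proof (rule ccontr)
  assume "\<not> W q0 \<le> c"
  then have W0: "W q0 > c" by simp
  have init': "W q \<le> c" if "q \<in> \<Omega>" "U q < 0" "snd q = 0" for q
  proof -
    have "q = (fst q, 0)"
      using that(3) by (simp add: prod_eq_iff)
    then show ?thesis
      using init[of "fst q"] that(1,2) by metis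
  qed
  define t0 where "t0 = snd q0"
  have "t0 \<noteq> 0"
    using init'[OF q0] W0 unfolding t0_def by auto
  then have t0: "t0 > 0"
    using time_nonneg[OF q0(1)] unfolding t0_def by simp
  \<comment> \<open>\<open>\<delta>\<close> lies halfway between \<open>c\<close> and \<open>W q0\<close>, so the maximiser of \<open>W - \<epsilon> t\<close> is not initial.\<close>
  define \<epsilon> where "\<epsilon> = (W q0 - c) / (2 * t0)"
  define \<delta> where "\<delta> = W q0 - \<epsilon> * t0"
  have \<epsilon>: "\<epsilon> > 0"
    using W0 t0 unfolding \<epsilon>_def by simp
  have "\<delta> = (W q0 + c) / 2"
    using t0 unfolding \<delta>_def \<epsilon>_def by (simp add: field_simps)
  then have \<delta>: "\<delta> > c" "\<delta> > 0"
    using W0 c by simp_all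
  let ?K = "penalized_superlevel t0 \<epsilon> \<delta>"
  have "q0 \<in> ?K"
    using q0 unfolding penalized_superlevel_def \<delta>_def t0_def by simp
  then obtain qs where qs: "qs \<in> ?K" and qs_max: "\<And>y. y \<in> ?K \<Longrightarrow> W y - \<epsilon> * snd y \<le> W qs - \<epsilon> * snd qs"
    using penalized_max_exists[OF less_imp_le[OF t0] less_imp_le[OF \<epsilon>] \<delta>(2)] by blast
  have Uqs: "U qs < 0"
    using U_negative_on_penalized_superlevel[OF less_imp_le[OF \<epsilon>] \<delta>(2) qs] .
  have qs': "qs \<in> \<Omega>" "\<delta> \<le> W qs - \<epsilon> * snd qs"
    using qs unfolding penalized_superlevel_def by auto
  have "snd qs \<noteq> 0"
  proof
    assume "snd qs = 0"
    with init'[OF qs'(1) Uqs] have "W qs \<le> c" .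
    with qs'(2) \<open>snd qs = 0\<close> \<delta>(1) show False
      by simp
  qed
  then have "qs \<in> positive_times"
    using \<open>qs \<in> \<Omega>\<close> time_nonneg[of qs] unfolding positive_times_def by simp
  then show False
    using no_interior_max_on_penalized_superlevel[OF \<epsilon> \<delta>(2) qs] qs_max by blast
qed

lemma initial_max_exists:
  assumes y0: "(y0, 0) \<in> \<Omega>" "U (y0, 0) < 0"
  obtains y where "(y, 0) \<in> \<Omega>" "U (y, 0) < 0"
    and "\<And>z. (z, 0) \<in> \<Omega> \<Longrightarrow> U (z, 0) < 0 \<Longrightarrow> W (z, 0) \<le> W (y, 0)"
proof -
  define \<delta> where "\<delta> = W (y0, 0)"
  let ?K = "penalized_superlevel 0 0 \<delta>"
  have \<delta>: "\<delta> > 0"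
    using y0 W_pos_iff unfolding \<delta>_def by simp
  have "(y0, 0) \<in> ?K"
    using y0 unfolding penalized_superlevel_def \<delta>_def by simp
  then obtain ys where ys: "ys \<in> ?K" and "\<And>y. y \<in> ?K \<Longrightarrow> W y - 0 * snd y \<le> W ys - 0 * snd ys"
    using penalized_max_exists[OF order_refl order_refl \<delta>] by blast
  then have ys_max: "\<And>y. y \<in> ?K \<Longrightarrow> W y \<le> W ys"
    by simp
  have ys': "ys \<in> \<Omega>" "snd ys \<le> 0" "\<delta> \<le> W ys"
    using ys unfolding penalized_superlevel_def by auto
  then have "ys = (fst ys, 0)"
    using time_nonneg[of ys] by (simp add: prod_eq_iff)
  moreover have "U ys < 0"
    using U_negative_on_penalized_superlevel[OF order_refl \<delta> ys] .
  moreover have "W (z, 0) \<le> W ys" if "(z, 0) \<in> \<Omega>" "U (z, 0) < 0" for z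
  proof (cases "\<delta> \<le> W (z, 0)")
    case True
    with that have "(z, 0) \<in> ?K"
      unfolding penalized_superlevel_def by simp
    then show ?thesis
      by (rule ys_max)
  next
    case False
    then show ?thesis
      using ys'(3) by simp
  qed
  ultimately show ?thesis
    using that[of "fst ys"] ys'(1) by metis
qed


end


theorem theorem5p3:
  fixes \<Omega> :: "('a::euclidean_space \<times> real) set" and u :: "'a \<Rightarrow> real \<Rightarrow> real"
  assumes "standing_assumption \<Omega> u"
  defines "w \<equiv> (\<lambda>p. vfac (\<lambda>q. u (fst q) (snd q)) \<Omega> p * (u (fst p) (snd p))\<^sup>2)"
  shows "\<forall>x t. (x, t) \<in> \<Omega> \<and> u x t < 0 \<longrightarrow>
           (\<exists>y. (y, 0) \<in> \<Omega> \<and> u y 0 < 0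
              \<and> (\<forall>z. (z, 0) \<in> \<Omega> \<and> u z 0 < 0 \<longrightarrow> w (z, 0) \<le> w (y, 0))
              \<and> w (x, t) \<le> w (y, 0))"
proof (intro allI impI)
  interpret graphical_mcf \<Omega> u
    by unfold_locales (rule assms(1))
  have w: "w = W" and U: "U (x, t) = u x t" for x t
    unfolding w_def W_def U_def by simp_all
  fix x t assume "(x, t) \<in> \<Omega> \<and> u x t < 0"
  then have xt: "(x, t) \<in> \<Omega>" "U (x, t) < 0"
    unfolding U by auto
  have "\<exists>y0. (y0, 0) \<in> \<Omega> \<and> U (y0, 0) < 0"
  proof (rule ccontr)
    assume none: "\<not> (\<exists>y0. (y0, 0) \<in> \<Omega> \<and> U (y0, 0) < 0)"
    have "W (x, t) \<le> 0"
      by (rule W_le_initial_bound[OF order_refl _ xt]) (use none in blast)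
    moreover have "W (x, t) > 0"
      using xt(2) W_pos_iff by simp
    ultimately show False
      by simp
  qed
  then obtain y0 where y0: "(y0, 0) \<in> \<Omega>" "U (y0, 0) < 0"
    by blast
  obtain y where y: "(y, 0) \<in> \<Omega>" "U (y, 0) < 0"
    and y_max: "\<And>z. (z, 0) \<in> \<Omega> \<Longrightarrow> U (z, 0) < 0 \<Longrightarrow> W (z, 0) \<le> W (y, 0)"
    using initial_max_exists[OF y0] by blast
  have "W (y, 0) \<ge> 0"
    using W_pos_iff y(2) by (simp add: less_imp_le)
  then have "W (x, t) \<le> W (y, 0)"
    by (rule W_le_initial_bound[OF _ y_max xt])
  then show "\<exists>y. (y, 0) \<in> \<Omega> \<and> u y 0 < 0
      \<and> (\<forall>z. (z, 0) \<in> \<Omega> \<and> u z 0 < 0 \<longrightarrow> w (z, 0) \<le> w (y, 0)) \<and> w (x, t) \<le> w (y, 0)"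
    unfolding w using y y_max unfolding U by blast
qed

end
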